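(* Let $\ell\ge2$, $\ell_1=\lfloor\ell/2\rfloor$. Let $A_1=\begin{pmatrix}0&\epsilon\alpha_1\\ \epsilon&0\end{pmatrix}$ and $A_2=\begin{pmatrix}0&\epsilon\alpha_2\\ \epsilon&0\end{pmatrix}$ in $\mathfrak g(\mathfrak o_{\ell_1})$ with $\mathrm{tt}(A_1)=\mathbf{cus}$ and $\mathrm{tt}(A_2)\in\{\mathbf{ss},\mathbf{sns}\}$, and fix Serre lifts $\tilde A_i=\begin{pmatrix}0&\epsilon\tilde\alpha_i\\ \epsilon&0\end{pmatrix}\in\mathfrak g(\mathfrak o_\ell)$. For $g\in\mathrm G(\mathfrak o_\ell)$ let $W_g$ be the set of double cosets $S_{A_1}hS_{A_2}$, $h\in\mathrm G(\mathfrak o_\ell)$, such that $\tilde A_1+g\tilde A_2g^{-1}$ and $\tilde A_1+h\tilde A_2h^{-1}$ are $\mathrm G(\mathfrak o_\ell)$-conjugate modulo $\pi^{\ell_1}$. Then $|W_g|=1$ for every $g\in\mathrm G(\mathfrak o_\ell)$.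
   Context: Let $\mathcal O$ be a complete discrete valuation ring with maximal ideal $\mathfrak p=\pi\mathcal O$ and finite residue field of odd characteristic and cardinality $q$. Let $\mathfrak O=\mathcal O[\vartheta]$ be the unramified quadratic extension, with $\vartheta^2\in\mathcal O^\times$ a non-square, and Galois involution $x\mapsto x^\circ$, $\vartheta^\circ=-\vartheta$. Let $\mathfrak o_k=\mathcal O/\mathfrak p^k$ and $\mathfrak O_k=\mathfrak O/\pi^k\mathfrak O$. $\mathrm G$ denotes either $\mathrm{GL}_2$ (so $\mathrm G(\mathfrak o_k)=\mathrm{GL}_2(\mathfrak o_k)$, $R_k=\mathfrak o_k$, $\epsilon=1$, $\mathfrak g(\mathfrak o_k)=M_2(\mathfrak o_k)$) or $\mathrm{GU}_2$ (so $\mathrm G(\mathfrak o_k)=\{A\in \mathrm{GL}_2(\mathfrak O_k): A^\star A=I\}$ where $(a_{ij})^\star=W(a_{ji}^\circ)W^{-1}$, $W=\begin{pmatrix}0&1\\1&0\end{pmatrix}$, $R_k=\mathfrak O_k$, $\epsilon=\vartheta$, $\mathfrak g(\mathfrak o_k)=\{A\in M_2(\mathfrak O_k):A+A^\star=0\}$). Let $\ell_2=\lceil\ell/2\rceil$, $K^{i}=\{I+\pi^iB\}\cap\mathrm G(\mathfrak o_\ell)$, and fix an additive character $\psi$ of $R_\ell$ nontrivial on $\pi^{\ell-1}\mathfrak o_\ell$. For $A\in\mathfrak g(\mathfrak o_{\ell_1})$, $\psi_A(I+\pi^{\ell_2}B)=\psi(\pi^{\ell_2}\mathrm{tr}(\tilde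 AB))$ ($\tilde A$ any lift) is a character of $K^{\ell_2}$ and $S_A$ is its stabilizer in $\mathrm G(\mathfrak o_\ell)$ under conjugation. A Serre lift keeps entries equal to $\epsilon$ or $0$ unchanged. Matrix types (up to $\mathrm G(\mathfrak o_{\ell_1})$-conjugacy): $\mathrm{tt}(A)=\mathbf{sns}$ if $A\sim\begin{pmatrix}x&\epsilon\pi\beta\\ \epsilon&x\end{pmatrix}$; $\mathbf{ss}$ if $A\sim\begin{pmatrix}x&\epsilon\delta\\ \epsilon&x\end{pmatrix}$ with $\delta$ a square unit (for $\mathrm{GL}_2$) resp. non-square unit (for $\mathrm{GU}_2$); $\mathbf{cus}$ if $A\sim\begin{pmatrix}x&\epsilon\sigma\\ \epsilon&x\end{pmatrix}$ with $\sigma$ a non-square unit (for $\mathrm{GL}_2$) resp. square unit (for $\mathrm{GU}_2$). *)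

theory Defs
  imports Complex_Main
begin

text \<open>The ambient type 'a plays the role of the unramified quadratic extension
  Oq = Ov[theta]; the set Ov is the complete DVR inside it.  Elements of
  o_k = Ov/p^k (resp. Oq_k) are represented by elements of Ov (resp. 'a), and
  equality in o_k is congruence modulo pi^k.\<close>

definition subring_of :: "'a::comm_ring_1 set \<Rightarrow> bool" where
  "subring_of Ov \<longleftrightarrow> 0 \<in> Ov \<and> 1 \<in> Ov \<and> (\<forall>x\<in>Ov. \<forall>y\<in>Ov. x + y \<in> Ov \<and> x - y \<in> Ov \<and> x * y \<in> Ov)"

definition unit_in :: "'a::comm_ring_1 set \<Rightarrow> 'a \<Rightarrow> bool" where
  "unit_in Ov u \<longleftrightarrow> u \<in> Ov \<and> (\<exists>v\<in>Ov. u * v = 1)"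

definition dvr_with_uniformizer :: "'a::idom set \<Rightarrow> 'a \<Rightarrow> bool" where
  "dvr_with_uniformizer Ov \<pi> \<longleftrightarrow> subring_of Ov \<and> \<pi> \<in> Ov \<and> \<pi> \<noteq> 0 \<and> \<not> unit_in Ov \<pi> \<and>
     (\<forall>x\<in>Ov. x \<noteq> 0 \<longrightarrow> (\<exists>u n. unit_in Ov u \<and> x = u * \<pi> ^ n))"

definition pi_adically_complete :: "'a::idom set \<Rightarrow> 'a \<Rightarrow> bool" where
  "pi_adically_complete Ov \<pi> \<longleftrightarrow>
     (\<forall>s::nat \<Rightarrow> 'a. (\<forall>n. s n \<in> Ov) \<longrightarrow>
        (\<forall>k. \<exists>N. \<forall>m\<ge>N. \<forall>n\<ge>N. \<pi> ^ k dvd (s m - s n)) \<longrightarrow>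
        (\<exists>L\<in>Ov. \<forall>k. \<exists>N. \<forall>n\<ge>N. \<pi> ^ k dvd (s n - L)))"

definition residue_field :: "'a::idom set \<Rightarrow> 'a \<Rightarrow> 'a set set" where
  "residue_field Ov \<pi> = (\<lambda>x. {y\<in>Ov. \<pi> dvd (y - x)}) ` Ov"

definition standing_setup :: "'a::idom set \<Rightarrow> 'a \<Rightarrow> 'a \<Rightarrow> ('a \<Rightarrow> 'a) \<Rightarrow> bool" where
  "standing_setup Ov \<pi> \<theta> gal \<longleftrightarrow>
     dvr_with_uniformizer Ov \<pi> \<and> pi_adically_complete Ov \<pi> \<and>
     finite (residue_field Ov \<pi>) \<and> \<not> \<pi> dvd 2 \<and>
     unit_in Ov (\<theta>^2) \<and> \<not> (\<exists>y\<in>Ov. y^2 = \<theta>^2) \<and>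
     (\<forall>x. \<exists>!ab. fst ab \<in> Ov \<and> snd ab \<in> Ov \<and> x = fst ab + snd ab * \<theta>) \<and>
     (\<forall>a\<in>Ov. \<forall>b\<in>Ov. gal (a + b * \<theta>) = a - b * \<theta>)"

datatype 'a m2 = M2 'a 'a 'a 'a  (* M2 a11 a12 a21 a22 *)

fun mmul :: "'a::comm_ring_1 m2 \<Rightarrow> 'a m2 \<Rightarrow> 'a m2" where
  "mmul (M2 a b c d) (M2 e f g h) = M2 (a*e+b*g) (a*f+b*h) (c*e+d*g) (c*f+d*h)"

fun madd :: "'a::comm_ring_1 m2 \<Rightarrow> 'a m2 \<Rightarrow> 'a m2" where
  "madd (M2 a b c d) (M2 e f g h) = M2 (a+e) (b+f) (c+g) (d+h)"

fun msmult :: "'a::comm_ring_1 \<Rightarrow> 'a m2 \<Rightarrow> 'a m2" where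
  "msmult s (M2 a b c d) = M2 (s*a) (s*b) (s*c) (s*d)"

definition mone :: "'a::comm_ring_1 m2" where "mone = M2 1 0 0 1"
definition mzero :: "'a::comm_ring_1 m2" where "mzero = M2 0 0 0 0"
definition Wmat :: "'a::comm_ring_1 m2" where "Wmat = M2 0 1 1 0"

fun mtrace :: "'a::comm_ring_1 m2 \<Rightarrow> 'a" where
  "mtrace (M2 a b c d) = a + d"

fun entries :: "'a m2 \<Rightarrow> 'a set" where
  "entries (M2 a b c d) = {a, b, c, d}"

fun galT :: "('a \<Rightarrow> 'a) \<Rightarrow> 'a m2 \<Rightarrow> 'a m2" where
  "galT gal (M2 a b c d) = M2 (gal a) (gal c) (gal b) (gal d)"

text \<open>A^star = W (gal A)^T W^{-1}; note W^{-1} = W.\<close>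
definition mstar :: "('a::comm_ring_1 \<Rightarrow> 'a) \<Rightarrow> 'a m2 \<Rightarrow> 'a m2" where
  "mstar gal A = mmul (mmul Wmat (galT gal A)) Wmat"

fun mcong :: "'a::comm_ring_1 \<Rightarrow> nat \<Rightarrow> 'a m2 \<Rightarrow> 'a m2 \<Rightarrow> bool" where
  "mcong \<pi> k (M2 a b c d) (M2 e f g h) \<longleftrightarrow>
     \<pi>^k dvd (a - e) \<and> \<pi>^k dvd (b - f) \<and> \<pi>^k dvd (c - g) \<and> \<pi>^k dvd (d - h)"

text \<open>The flag unitary selects G = GU_2 (True) or G = GL_2 (False).\<close>

definition Rset :: "bool \<Rightarrow> 'a set \<Rightarrow> 'a set" where
  "Rset unitary Ov = (if unitary then UNIV else Ov)"

definition eps :: "bool \<Rightarrow> 'a::comm_ring_1 \<Rightarrow> 'a" where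
  "eps unitary \<theta> = (if unitary then \<theta> else 1)"

definition Gset :: "bool \<Rightarrow> 'a::comm_ring_1 set \<Rightarrow> 'a \<Rightarrow> ('a \<Rightarrow> 'a) \<Rightarrow> nat \<Rightarrow> 'a m2 set" where
  "Gset unitary Ov \<pi> gal k =
     {g. entries g \<subseteq> Rset unitary Ov \<and>
         (\<exists>h. entries h \<subseteq> Rset unitary Ov \<and> mcong \<pi> k (mmul g h) mone \<and> mcong \<pi> k (mmul h g) mone) \<and>
         (unitary \<longrightarrow> mcong \<pi> k (mmul (mstar gal g) g) mone)}"

definition gset :: "bool \<Rightarrow> 'a::comm_ring_1 set \<Rightarrow> 'a \<Rightarrow> ('a \<Rightarrow> 'a) \<Rightarrow> nat \<Rightarrow> 'a m2 set" where
  "gset unitary Ov \<pi> gal k =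
     {A. entries A \<subseteq> Rset unitary Ov \<and> (unitary \<longrightarrow> mcong \<pi> k (madd A (mstar gal A)) mzero)}"

definition minv :: "bool \<Rightarrow> 'a::comm_ring_1 set \<Rightarrow> 'a \<Rightarrow> nat \<Rightarrow> 'a m2 \<Rightarrow> 'a m2" where
  "minv unitary Ov \<pi> k g = (SOME h. entries h \<subseteq> Rset unitary Ov \<and> mcong \<pi> k (mmul g h) mone)"

definition Kgrp :: "bool \<Rightarrow> 'a::comm_ring_1 set \<Rightarrow> 'a \<Rightarrow> ('a \<Rightarrow> 'a) \<Rightarrow> nat \<Rightarrow> nat \<Rightarrow> 'a m2 set" where
  "Kgrp unitary Ov \<pi> gal l i =
     {g \<in> Gset unitary Ov \<pi> gal l. \<exists>B. entries B \<subseteq> Rset unitary Ov \<and> mcong \<pi> l g (madd mone (msmult (\<pi>^i) B))}"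

definition ceil_half :: "nat \<Rightarrow> nat" where "ceil_half l = l - l div 2"
definition floor_half :: "nat \<Rightarrow> nat" where "floor_half l = l div 2"

text \<open>psi_A(I + pi^{l2} B) = psi(pi^{l2} tr(A B)), A a lift of an element of g(o_{l1}).\<close>
definition psiA :: "bool \<Rightarrow> 'a::comm_ring_1 set \<Rightarrow> 'a \<Rightarrow> nat \<Rightarrow> ('a \<Rightarrow> complex) \<Rightarrow> 'a m2 \<Rightarrow> 'a m2 \<Rightarrow> complex" where
  "psiA unitary Ov \<pi> l \<psi> A k =
     (let B = (SOME B. entries B \<subseteq> Rset unitary Ov \<and>
                 mcong \<pi> l k (madd mone (msmult (\<pi>^ceil_half l) B)))
      in \<psi> (\<pi>^ceil_half l * mtrace (mmul A B)))"

definition stabS :: "bool \<Rightarrow> 'a::comm_ring_1 set \<Rightarrow> 'a \<Rightarrow> ('a \<Rightarrow> 'a) \<Rightarrow> nat \<Rightarrow> ('a \<Rightarrow> complex) \<Rightarrow> 'a m2 \<Rightarrow> 'a m2 set" where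
  "stabS unitary Ov \<pi> gal l \<psi> A =
     {g \<in> Gset unitary Ov \<pi> gal l. \<forall>k \<in> Kgrp unitary Ov \<pi> gal l (ceil_half l).
        psiA unitary Ov \<pi> l \<psi> A (mmul (mmul g k) (minv unitary Ov \<pi> l g)) = psiA unitary Ov \<pi> l \<psi> A k}"

definition good_character :: "bool \<Rightarrow> 'a::comm_ring_1 set \<Rightarrow> 'a \<Rightarrow> nat \<Rightarrow> ('a \<Rightarrow> complex) \<Rightarrow> bool" where
  "good_character unitary Ov \<pi> l \<psi> \<longleftrightarrow>
     \<psi> 0 = 1 \<and>
     (\<forall>x\<in>Rset unitary Ov. \<forall>y\<in>Rset unitary Ov. \<psi> (x + y) = \<psi> x * \<psi> y) \<and>
     (\<forall>x\<in>Rset unitary Ov. \<forall>y\<in>Rset unitary Ov. \<pi>^l dvd (x - y) \<longrightarrow> \<psi> x = \<psi> y) \<and>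
     (\<exists>x\<in>Ov. \<psi> (\<pi>^(l-1) * x) \<noteq> 1)"

definition conjugate_in :: "bool \<Rightarrow> 'a::comm_ring_1 set \<Rightarrow> 'a \<Rightarrow> ('a \<Rightarrow> 'a) \<Rightarrow> nat \<Rightarrow> 'a m2 \<Rightarrow> 'a m2 \<Rightarrow> bool" where
  "conjugate_in unitary Ov \<pi> gal k A B \<longleftrightarrow>
     (\<exists>g \<in> Gset unitary Ov \<pi> gal k. mcong \<pi> k (mmul g A) (mmul B g))"

definition square_mod :: "'a::comm_ring_1 set \<Rightarrow> 'a \<Rightarrow> nat \<Rightarrow> 'a \<Rightarrow> bool" where
  "square_mod Ov \<pi> k x \<longleftrightarrow> (\<exists>y\<in>Ov. \<pi>^k dvd (x - y^2))"

text \<open>unit of o_k (k \<ge> 1): not divisible by pi.\<close>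
definition unit_mod :: "'a::comm_ring_1 set \<Rightarrow> 'a \<Rightarrow> 'a \<Rightarrow> bool" where
  "unit_mod Ov \<pi> x \<longleftrightarrow> x \<in> Ov \<and> \<not> \<pi> dvd x"

definition tt_sns :: "bool \<Rightarrow> 'a::comm_ring_1 set \<Rightarrow> 'a \<Rightarrow> 'a \<Rightarrow> ('a \<Rightarrow> 'a) \<Rightarrow> nat \<Rightarrow> 'a m2 \<Rightarrow> bool" where
  "tt_sns unitary Ov \<pi> \<theta> gal k A \<longleftrightarrow>
     (\<exists>x\<in>Rset unitary Ov. \<exists>\<beta>\<in>Ov. conjugate_in unitary Ov \<pi> gal k A
        (M2 x (eps unitary \<theta> * \<pi> * \<beta>) (eps unitary \<theta>) x))"

definition tt_ss :: "bool \<Rightarrow> 'a::comm_ring_1 set \<Rightarrow> 'a \<Rightarrow> 'a \<Rightarrow> ('a \<Rightarrow> 'a) \<Rightarrow> nat \<Rightarrow> 'a m2 \<Rightarrow> bool" where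
  "tt_ss unitary Ov \<pi> \<theta> gal k A \<longleftrightarrow>
     (\<exists>x\<in>Rset unitary Ov. \<exists>\<delta>. unit_mod Ov \<pi> \<delta> \<and>
        (if unitary then \<not> square_mod Ov \<pi> k \<delta> else square_mod Ov \<pi> k \<delta>) \<and>
        conjugate_in unitary Ov \<pi> gal k A (M2 x (eps unitary \<theta> * \<delta>) (eps unitary \<theta>) x))"

definition tt_cus :: "bool \<Rightarrow> 'a::comm_ring_1 set \<Rightarrow> 'a \<Rightarrow> 'a \<Rightarrow> ('a \<Rightarrow> 'a) \<Rightarrow> nat \<Rightarrow> 'a m2 \<Rightarrow> bool" where
  "tt_cus unitary Ov \<pi> \<theta> gal k A \<longleftrightarrow>
     (\<exists>x\<in>Rset unitary Ov. \<exists>\<sigma>. unit_mod Ov \<pi> \<sigma> \<and>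
        (if unitary then square_mod Ov \<pi> k \<sigma> else \<not> square_mod Ov \<pi> k \<sigma>) \<and>
        conjugate_in unitary Ov \<pi> gal k A (M2 x (eps unitary \<theta> * \<sigma>) (eps unitary \<theta>) x))"

definition double_coset :: "bool \<Rightarrow> 'a::comm_ring_1 set \<Rightarrow> 'a \<Rightarrow> ('a \<Rightarrow> 'a) \<Rightarrow> nat \<Rightarrow> 'a m2 set \<Rightarrow> 'a m2 \<Rightarrow> 'a m2 set \<Rightarrow> 'a m2 set" where
  "double_coset unitary Ov \<pi> gal l S1 h S2 =
     {m \<in> Gset unitary Ov \<pi> gal l. \<exists>s1\<in>S1. \<exists>s2\<in>S2. mcong \<pi> l m (mmul (mmul s1 h) s2)}"

definition Wset :: "bool \<Rightarrow> 'a::comm_ring_1 set \<Rightarrow> 'a \<Rightarrow> ('a \<Rightarrow> 'a) \<Rightarrow> nat \<Rightarrow> ('a \<Rightarrow> complex) \<Rightarrow>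
     'a m2 \<Rightarrow> 'a m2 \<Rightarrow> 'a m2 \<Rightarrow> 'a m2 set set" where
  "Wset unitary Ov \<pi> gal l \<psi> At1 At2 g =
     (let S1 = stabS unitary Ov \<pi> gal l \<psi> At1; S2 = stabS unitary Ov \<pi> gal l \<psi> At2;
          M = (\<lambda>x. madd At1 (mmul (mmul x At2) (minv unitary Ov \<pi> l x)))
      in {double_coset unitary Ov \<pi> gal l S1 h S2 | h.
            h \<in> Gset unitary Ov \<pi> gal l \<and>
            (\<exists>x \<in> Gset unitary Ov \<pi> gal l. mcong \<pi> (floor_half l) (mmul x (M g)) (mmul (M h) x))})"

end

theory Submission
  imports Defs
begin

text \<open>Write A1 = Amat a, A2 = Amat b for the two lifts and M = g A2 g^-1, N = h A2 h^-1.
  Conjugacy of A1 + M and A1 + N modulo pi^l1 forces, through the determinant, the congruence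
  tr(A1 M) = tr(A1 N); together with tr M = tr N = 0 and det M = det N it makes two explicit
  matrices U I + V (0, a; 1, 0), both commuting with A1, intertwine M and N modulo pi^l1.
  As a is a non-square unit (GL_2), resp. a square unit (GU_2, where U is real and V imaginary),
  the norm U^2 - a V^2 is a unit unless pi divides U and V; and as b is divisible by pi or lies
  in the other square class, not both candidates can degenerate, since otherwise M would vanish
  modulo pi.  A suitable multiple c1 of an invertible candidate lies in G, centralizes A1, and
  c2 = g^-1 c1^-1 h then centralizes A2 modulo pi^l1 with h = c1 g c2.  Elements centralizing
  A modulo pi^l1 stabilize psi_A, hence every double coset in W_g is S_A1 g S_A2.\<close>

lemma dvd_diff_add:
  "(p::'a::comm_ring_1) dvd x - x' \<Longrightarrow> p dvd y - y' \<Longrightarrow> p dvd (x + y) - (x' + y')"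
  using dvd_add[of p "x - x'" "y - y'"] by (simp add: algebra_simps)

lemma dvd_diff_diff:
  "(p::'a::comm_ring_1) dvd x - x' \<Longrightarrow> p dvd y - y' \<Longrightarrow> p dvd (x - y) - (x' - y')"
  using dvd_diff[of p "x - x'" "y - y'"] by (simp add: algebra_simps)

lemma dvd_diff_mult:
  "(p::'a::comm_ring_1) dvd x - x' \<Longrightarrow> p dvd y - y' \<Longrightarrow> p dvd x * y - x' * y'"
proof -
  assume "p dvd x - x'" "p dvd y - y'"
  then have "p dvd (x - x') * y + x' * (y - y')" by (simp add: dvd_add)
  then show ?thesis by (simp add: algebra_simps)
qed

lemma dvd_diff_swap: "(p::'a::comm_ring_1) dvd x - y \<longleftrightarrow> p dvd y - x"
  by (metis dvd_minus_iff minus_diff_eq)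

lemma dvd_diff_trans: "(p::'a::comm_ring_1) dvd x - y \<Longrightarrow> p dvd y - z \<Longrightarrow> p dvd x - z"
  using dvd_add[of p "x - y" "y - z"] by simp

lemma dvd_minus_diff_iff: "(p::'a::comm_ring_1) dvd - x - y \<longleftrightarrow> p dvd x + y"
  by (metis dvd_minus_iff minus_diff_eq diff_minus_eq_add add.commute)

lemma dvd_cancel_unit: assumes "(u::'a::comm_ring_1) * v = 1" "p dvd u * x" shows "p dvd x"
proof -
  have "x = (u * v) * x" using assms(1) by simp
  also have "\<dots> = v * (u * x)" by (simp add: ac_simps)
  finally have "x = v * (u * x)" .
  then show ?thesis using assms(2) by (metis dvd_mult)
qed

lemma mmul_assoc: "mmul (mmul A B) C = mmul A (mmul B (C::'a::comm_ring_1 m2))"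
  by (cases A; cases B; cases C) (simp add: algebra_simps)

lemma mmul_mone [simp]: "mmul mone A = A" "mmul A mone = (A::'a::comm_ring_1 m2)"
  by (cases A; simp add: mone_def)+

lemma mmul_mzero [simp]: "mmul mzero A = mzero" "mmul A mzero = (mzero::'a::comm_ring_1 m2)"
  by (cases A; simp add: mzero_def)+

lemma msmult_mmul: "mmul (msmult s A) B = msmult s (mmul A B)" "mmul A (msmult s B) = msmult s (mmul A B)"
  for A B :: "'a::comm_ring_1 m2"
  by (cases A; cases B; simp add: algebra_simps)+

lemma msmult_msmult: "msmult s (msmult t A) = msmult (s * t) (A::'a::comm_ring_1 m2)"
  by (cases A) (simp add: algebra_simps)

lemma msmult_one [simp]: "msmult 1 A = (A::'a::comm_ring_1 m2)"
  by (cases A) simp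

fun det2 :: "'a::comm_ring_1 m2 \<Rightarrow> 'a" where
  "det2 (M2 a b c d) = a * d - b * c"

lemma det2_mmul: "det2 (mmul A B) = det2 A * det2 B"
  by (cases A; cases B) (simp add: algebra_simps)

lemma mtrace_mmul_commute: "mtrace (mmul A B) = mtrace (mmul B (A::'a::comm_ring_1 m2))"
  by (cases A; cases B) (simp add: algebra_simps)

lemma det2_madd: "det2 (madd A B) = det2 A + det2 B + mtrace A * mtrace B - mtrace (mmul A B)"
  for A B :: "'a::comm_ring_1 m2"
  by (cases A; cases B) (simp add: algebra_simps)

lemma mmul_conj_expand:
  "mmul (mmul g (madd mone (msmult s B))) g' = madd (mmul g g') (msmult s (mmul (mmul g B) g'))"
  for g B g' :: "'a::comm_ring_1 m2"
  by (cases g; cases g'; cases B) (simp add: mone_def algebra_simps)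

lemma mcong_refl [simp]: "mcong p k A A"
  by (cases A) simp

lemma mcong_sym: "mcong p k A B \<Longrightarrow> mcong p k B A"
  by (cases A; cases B) (auto simp: dvd_diff_swap)

lemma mcong_trans [trans]: "mcong p k A B \<Longrightarrow> mcong p k B C \<Longrightarrow> mcong p k A C"
  by (cases A; cases B; cases C) (auto intro: dvd_diff_trans)

lemma mcong_mono: "j \<le> k \<Longrightarrow> mcong p k A B \<Longrightarrow> mcong p j A B"
  by (cases A; cases B) (auto intro: dvd_trans[OF le_imp_power_dvd])

lemma mcong_mmul: "mcong p k A A' \<Longrightarrow> mcong p k B B' \<Longrightarrow> mcong p k (mmul A B) (mmul A' B')"
  by (cases A; cases A'; cases B; cases B')
    (simp only: mcong.simps mmul.simps; elim conjE; intro conjI dvd_diff_add dvd_diff_mult; assumption)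

lemma mcong_mmul_left: "mcong p k B B' \<Longrightarrow> mcong p k (mmul A B) (mmul A B')"
  by (rule mcong_mmul[OF mcong_refl])

lemma mcong_mmul_right: "mcong p k A A' \<Longrightarrow> mcong p k (mmul A B) (mmul A' B)"
  by (rule mcong_mmul[OF _ mcong_refl])

lemma mcong_madd: "mcong p k A A' \<Longrightarrow> mcong p k B B' \<Longrightarrow> mcong p k (madd A B) (madd A' B')"
  by (cases A; cases A'; cases B; cases B') (simp add: dvd_diff_add)

lemma mcong_msmult: "mcong p k A A' \<Longrightarrow> mcong p k (msmult s A) (msmult s A')"
  by (cases A; cases A') (simp add: dvd_diff_mult)

lemma mcong_msmult_scalar: "p^k dvd s - s' \<Longrightarrow> mcong p k (msmult s A) (msmult s' A)"
  by (cases A) (simp add: dvd_diff_mult)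

lemma mcong_det2: "mcong p k A B \<Longrightarrow> p^k dvd det2 A - det2 B"
  by (cases A; cases B) (simp add: dvd_diff_diff dvd_diff_mult)

lemma mcong_mtrace: "mcong p k A B \<Longrightarrow> p^k dvd mtrace A - mtrace B"
  by (cases A; cases B) (simp add: dvd_diff_add)

lemma dvd_linear_combination:
  "(X::'a::comm_ring_1) = c1 * t1 + c2 * t2 + c3 * D + c4 * T \<Longrightarrow>
    p dvd t1 \<Longrightarrow> p dvd t2 \<Longrightarrow> p dvd D \<Longrightarrow> p dvd T \<Longrightarrow> p dvd X"
  by (simp add: dvd_add dvd_mult)

text \<open>The two intertwiners below commute with (0, a; 1, 0); each entry of X M - N X is an explicit
  linear combination of the four hypotheses.\<close>

lemma intertwiner_diag:
  fixes m1 m2 m3 m4 n1 n2 n3 n4 a :: "'a::comm_ring_1"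
  assumes t1: "p^k dvd m1 + m4" and t2: "p^k dvd n1 + n4"
    and D: "p^k dvd (m1 * m4 - m2 * m3) - (n1 * n4 - n2 * n3)" and T: "p^k dvd (a * m3 + m2) - (a * n3 + n2)"
  shows "mcong p k (mmul (M2 (m1 + n1) (a * (n3 - m3)) (n3 - m3) (m1 + n1)) (M2 m1 m2 m3 m4))
                   (mmul (M2 n1 n2 n3 n4) (M2 (m1 + n1) (a * (n3 - m3)) (n3 - m3) (m1 + n1)))"
proof -
  note comb = dvd_linear_combination[OF _ t1 t2 D T]
  have "p^k dvd (m1 + n1) * m1 + a * (n3 - m3) * m3 - (n1 * (m1 + n1) + n2 * (n3 - m3))"
    by (rule comb[of _ m1 "- n1" "- 1" "- m3"]) (simp add: algebra_simps)
  moreover have "p^k dvd (m1 + n1) * m2 + a * (n3 - m3) * m4 - (n1 * (a * (n3 - m3)) + n2 * (m1 + n1))"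
    by (rule comb[of _ "a * (n3 - m3)" 0 0 "m1 + n1"]) (simp add: algebra_simps)
  moreover have "p^k dvd (n3 - m3) * m1 + (m1 + n1) * m3 - (n3 * (m1 + n1) + n4 * (n3 - m3))"
    by (rule comb[of _ 0 "- (n3 - m3)" 0 0]) (simp add: algebra_simps)
  moreover have "p^k dvd (n3 - m3) * m2 + (m1 + n1) * m4 - (n3 * (a * (n3 - m3)) + n4 * (m1 + n1))"
    by (rule comb[of _ n1 "- m1" 1 n3]) (simp add: algebra_simps)
  ultimately show ?thesis by simp
qed

lemma intertwiner_offdiag:
  fixes m1 m2 m3 m4 n1 n2 n3 n4 a :: "'a::comm_ring_1"
  assumes t1: "p^k dvd m1 + m4" and t2: "p^k dvd n1 + n4"
    and D: "p^k dvd (m1 * m4 - m2 * m3) - (n1 * n4 - n2 * n3)" and T: "p^k dvd (a * m3 + m2) - (a * n3 + n2)"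
  shows "mcong p k (mmul (M2 (a * m3 - n2) (a * (n1 - m1)) (n1 - m1) (a * m3 - n2)) (M2 m1 m2 m3 m4))
                   (mmul (M2 n1 n2 n3 n4) (M2 (a * m3 - n2) (a * (n1 - m1)) (n1 - m1) (a * m3 - n2)))"
proof -
  note comb = dvd_linear_combination[OF _ t1 t2 D T]
  have "p^k dvd (a * m3 - n2) * m1 + a * (n1 - m1) * m3 - (n1 * (a * m3 - n2) + n2 * (n1 - m1))"
    by (rule comb[of _ 0 0 0 0]) (simp add: algebra_simps)
  moreover have "p^k dvd (a * m3 - n2) * m2 + a * (n1 - m1) * m4 - (n1 * (a * (n1 - m1)) + n2 * (a * m3 - n2))"
    by (rule comb[of _ "a * n1" "- a * n1" "- a" "- n2"]) (simp add: algebra_simps)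
  moreover have "p^k dvd (n1 - m1) * m1 + (a * m3 - n2) * m3 - (n3 * (a * m3 - n2) + n4 * (n1 - m1))"
    by (rule comb[of _ "- m1" m1 1 m3]) (simp add: algebra_simps)
  moreover have "p^k dvd (n1 - m1) * m2 + (a * m3 - n2) * m4 - (n3 * (a * (n1 - m1)) + n4 * (a * m3 - n2))"
    by (rule comb[of _ "a * m3 - n2" "- (a * m3 - n2)" 0 "n1 - m1"]) (simp add: algebra_simps)
  ultimately show ?thesis by simp
qed

lemma centralizer_commute: "mmul (M2 U (a * V) V U) (M2 0 (e * a) e 0) = mmul (M2 0 (e * a) e 0) (M2 U (a * V) V U)"
  for U V a e :: "'a::comm_ring_1"
  by (simp add: algebra_simps)

locale unramified_ext =
  fixes Ov :: "'a::idom set" and \<pi> \<theta> :: 'a and gal :: "'a \<Rightarrow> 'a"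
  assumes standing: "standing_setup Ov \<pi> \<theta> gal"
begin

lemma Ov_subring: "subring_of Ov"
  and pi_in_Ov: "\<pi> \<in> Ov" and pi_nonzero: "\<pi> \<noteq> 0" and pi_not_unit: "\<not> unit_in Ov \<pi>"
  and Ov_unit_times_pi_power: "\<And>x. x \<in> Ov \<Longrightarrow> x \<noteq> 0 \<Longrightarrow> \<exists>u n. unit_in Ov u \<and> x = u * \<pi> ^ n"
  and Ov_complete: "pi_adically_complete Ov \<pi>"
  and pi_not_dvd_2: "\<not> \<pi> dvd 2"
  and theta_sq_unit: "unit_in Ov (\<theta>^2)" and theta_sq_not_square: "\<not> (\<exists>y\<in>Ov. y^2 = \<theta>^2)"
  and theta_basis: "\<And>x. \<exists>!ab. fst ab \<in> Ov \<and> snd ab \<in> Ov \<and> x = fst ab + snd ab * \<theta>"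
  and gal_basis: "\<And>a b. a \<in> Ov \<Longrightarrow> b \<in> Ov \<Longrightarrow> gal (a + b * \<theta>) = a - b * \<theta>"
  using standing unfolding standing_setup_def dvr_with_uniformizer_def by auto

lemma Ov_0 [simp]: "0 \<in> Ov" and Ov_1 [simp]: "1 \<in> Ov"
  and Ov_add [intro]: "x \<in> Ov \<Longrightarrow> y \<in> Ov \<Longrightarrow> x + y \<in> Ov"
  and Ov_diff [intro]: "x \<in> Ov \<Longrightarrow> y \<in> Ov \<Longrightarrow> x - y \<in> Ov"
  and Ov_mult [intro]: "x \<in> Ov \<Longrightarrow> y \<in> Ov \<Longrightarrow> x * y \<in> Ov"
  using Ov_subring unfolding subring_of_def by auto

lemma Ov_uminus [intro]: "x \<in> Ov \<Longrightarrow> - x \<in> Ov"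
  using Ov_diff[of 0 x] by simp

lemma Ov_power [intro]: "x \<in> Ov \<Longrightarrow> x ^ n \<in> Ov"
  by (induction n) auto

lemma theta_sq_in_Ov [simp]: "\<theta>^2 \<in> Ov"
  using theta_sq_unit unfolding unit_in_def by auto

lemma theta_decomp: obtains p q where "p \<in> Ov" "q \<in> Ov" "x = p + q * \<theta>"
  using theta_basis[of x] by auto

lemma theta_decomp_unique:
  "p \<in> Ov \<Longrightarrow> q \<in> Ov \<Longrightarrow> p' \<in> Ov \<Longrightarrow> q' \<in> Ov \<Longrightarrow> p + q * \<theta> = p' + q' * \<theta> \<Longrightarrow> p = p' \<and> q = q'"
  using theta_basis[of "p + q * \<theta>"] by (metis fst_conv snd_conv)

lemma gal_Ov [simp]: "a \<in> Ov \<Longrightarrow> gal a = a"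
  using gal_basis[of a 0] by simp

lemma gal_theta [simp]: "gal \<theta> = - \<theta>"
  using gal_basis[of 0 1] by simp

lemma gal_add [simp]: "gal (x + y) = gal x + gal y"
proof -
  obtain p q p' q' where pq: "p \<in> Ov" "q \<in> Ov" "x = p + q * \<theta>" "p' \<in> Ov" "q' \<in> Ov" "y = p' + q' * \<theta>"
    by (metis theta_decomp)
  have "x + y = (p + p') + (q + q') * \<theta>" using pq by (simp add: algebra_simps)
  moreover have "p + p' \<in> Ov" "q + q' \<in> Ov" using pq by auto
  ultimately have xy: "gal (x + y) = (p + p') - (q + q') * \<theta>" using gal_basis by metis
  have gxy: "gal x = p - q * \<theta>" "gal y = p' - q' * \<theta>" using pq gal_basis by auto
  show ?thesis unfolding xy gxy by (simp add: algebra_simps)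
qed

lemma gal_mult [simp]: "gal (x * y) = gal x * gal y"
proof -
  obtain p q p' q' where pq: "p \<in> Ov" "q \<in> Ov" "x = p + q * \<theta>" "p' \<in> Ov" "q' \<in> Ov" "y = p' + q' * \<theta>"
    by (metis theta_decomp)
  have "x * y = (p * p' + q * q' * \<theta>^2) + (p * q' + q * p') * \<theta>"
    using pq by (simp add: algebra_simps power2_eq_square)
  moreover have "p * p' + q * q' * \<theta>^2 \<in> Ov" "p * q' + q * p' \<in> Ov"
    using pq theta_sq_in_Ov by (auto intro!: Ov_add Ov_mult)
  ultimately have xy: "gal (x * y) = (p * p' + q * q' * \<theta>^2) - (p * q' + q * p') * \<theta>"
    using gal_basis by metis
  have gxy: "gal x = p - q * \<theta>" "gal y = p' - q' * \<theta>" using pq gal_basis by auto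
  show ?thesis unfolding xy gxy by (simp add: algebra_simps power2_eq_square)
qed

lemma gal_gal [simp]: "gal (gal x) = x"
proof -
  obtain p q where pq: "p \<in> Ov" "q \<in> Ov" "x = p + q * \<theta>" by (rule theta_decomp)
  then have "gal x = p + (- q) * \<theta>" using gal_basis by simp
  moreover have "- q \<in> Ov" using pq by auto
  ultimately have "gal (gal x) = p - (- q) * \<theta>" using gal_basis pq by metis
  with pq show ?thesis by simp
qed

lemma gal_uminus [simp]: "gal (- x) = - gal x"
  using gal_add[of x "- x"] by (simp add: add_eq_0_iff2)

lemma gal_diff [simp]: "gal (x - y) = gal x - gal y"
  using gal_add[of x "- y"] by simp

lemma gal_power [simp]: "gal (x ^ n) = gal x ^ n"
  by (induction n) auto

lemma gal_pi_power_dvd: "\<pi>^k dvd x \<Longrightarrow> \<pi>^k dvd gal x"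
  using pi_in_Ov by (auto elim!: dvdE)

subsection \<open>Divisibility by the uniformizer\<close>

lemma pi_power_dvd_in_Ov:
  assumes "x \<in> Ov" "\<pi>^k dvd x" shows "\<exists>y\<in>Ov. x = \<pi>^k * y"
proof -
  obtain r where r: "x = \<pi>^k * r" using assms by (auto elim: dvdE)
  obtain p q where pq: "p \<in> Ov" "q \<in> Ov" "r = p + q * \<theta>" by (rule theta_decomp)
  have "x + 0 * \<theta> = \<pi>^k * p + (\<pi>^k * q) * \<theta>" using r pq by (simp add: algebra_simps)
  then have "\<pi>^k * q = 0" using theta_decomp_unique[of x 0 "\<pi>^k * p" "\<pi>^k * q"] assms pq pi_in_Ov by auto
  with pi_nonzero pq r show ?thesis by auto
qed

lemma pi_not_dvd_1: "\<not> \<pi> dvd 1"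
proof
  assume "\<pi> dvd 1"
  then obtain y where "y \<in> Ov" "1 = \<pi>^1 * y" using pi_power_dvd_in_Ov[of 1 1] by auto
  then show False using pi_not_unit pi_in_Ov unfolding unit_in_def by (metis power_one_right)
qed

lemma pi_not_dvd_unit: "u * v = 1 \<Longrightarrow> \<not> \<pi> dvd u"
  using pi_not_dvd_1 by (metis dvd_mult2)

lemma inverse_in_Ov: assumes "x \<in> Ov" "\<not> \<pi> dvd x" shows "\<exists>v\<in>Ov. x * v = 1"
proof -
  have "x \<noteq> 0" using assms by auto
  then obtain u n where u: "unit_in Ov u" "x = u * \<pi>^n"
    using Ov_unit_times_pi_power assms by blast
  with assms have "n = 0" by (cases n) auto
  with u show ?thesis unfolding unit_in_def by simp
qed

lemma pi_prime: assumes "x \<in> Ov" "y \<in> Ov" "\<pi> dvd x * y" shows "\<pi> dvd x \<or> \<pi> dvd y"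
proof (rule ccontr)
  assume "\<not> (\<pi> dvd x \<or> \<pi> dvd y)"
  then obtain v w where "x * v = 1" "y * w = 1" using inverse_in_Ov assms by meson
  then have "(x * y) * (v * w) = 1" by (metis mult.assoc mult.left_commute mult_1_right)
  then show False using pi_not_dvd_unit assms(3) by blast
qed

lemma pi_dvd_square: "x \<in> Ov \<Longrightarrow> \<pi> dvd x^2 \<Longrightarrow> \<pi> dvd x"
  using pi_prime[of x x] by (simp add: power2_eq_square)

lemma pi_dvd_of_pi_power_dvd: "1 \<le> k \<Longrightarrow> \<pi>^k dvd x \<Longrightarrow> \<pi> dvd x"
  using le_imp_power_dvd[of 1 k \<pi>] dvd_trans by auto

lemma pi_power_dvd_mono: "j \<le> k \<Longrightarrow> \<pi>^k dvd x \<Longrightarrow> \<pi>^j dvd x"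
  using le_imp_power_dvd dvd_trans by blast

lemma dvd_cancel_2: "\<pi>^k dvd 2 * x \<Longrightarrow> \<pi>^k dvd x"
proof -
  have "2 \<in> Ov" using Ov_add[OF Ov_1 Ov_1] by simp
  then obtain v where "v \<in> Ov" "2 * v = 1" using inverse_in_Ov[OF _ pi_not_dvd_2] by blast
  then show "\<pi>^k dvd 2 * x \<Longrightarrow> \<pi>^k dvd x" using dvd_cancel_unit by blast
qed

lemma dvd_cancel_theta_sq: "\<pi>^k dvd \<theta>^2 * x \<Longrightarrow> \<pi>^k dvd x"
proof -
  obtain v where "v \<in> Ov" "\<theta>^2 * v = 1" using theta_sq_unit unfolding unit_in_def by blast
  then show "\<pi>^k dvd \<theta>^2 * x \<Longrightarrow> \<pi>^k dvd x" using dvd_cancel_unit by blast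
qed

lemma dvd_cancel_theta: "\<pi>^k dvd \<theta> * x \<Longrightarrow> \<pi>^k dvd x"
proof -
  assume "\<pi>^k dvd \<theta> * x"
  then have "\<pi>^k dvd \<theta>^2 * x" by (metis dvd_mult mult.assoc power2_eq_square)
  then show ?thesis by (rule dvd_cancel_theta_sq)
qed

lemma dvd_cancel_eps: "\<pi>^k dvd eps u \<theta> * x \<Longrightarrow> \<pi>^k dvd x"
  by (cases u) (auto simp: eps_def intro: dvd_cancel_theta)

lemma pi_not_dvd_eps: "\<not> \<pi> dvd eps u \<theta>"
proof
  assume "\<pi> dvd eps u \<theta>"
  then have "\<pi>^1 dvd eps u \<theta> * 1" by simp
  then show False using dvd_cancel_eps pi_not_dvd_1 by fastforce
qed

lemma Ov_eq_0_of_pi_power_dvd: assumes "x \<in> Ov" "\<And>k. \<pi>^k dvd x" shows "x = 0"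
proof (rule ccontr)
  assume "x \<noteq> 0"
  then obtain u n where u: "unit_in Ov u" "x = u * \<pi>^n" using Ov_unit_times_pi_power assms by blast
  obtain r where "u * \<pi>^n = \<pi>^(Suc n) * r" using assms(2)[of "Suc n"] u by (auto elim: dvdE)
  then have "\<pi>^n * u = \<pi>^n * (\<pi> * r)" by (simp add: algebra_simps)
  then have "u = \<pi> * r" using pi_nonzero by simp
  then show False using u pi_not_dvd_unit unfolding unit_in_def by (metis dvd_triv_left)
qed

subsection \<open>Squares modulo powers of the uniformizer\<close>

lemma square_mod_cong: "square_mod Ov \<pi> k x \<Longrightarrow> \<pi>^k dvd x - x' \<Longrightarrow> square_mod Ov \<pi> k x'"
  unfolding square_mod_def by (metis dvd_diff_swap dvd_diff_trans)

lemma square_mod_mono: "j \<le> k \<Longrightarrow> square_mod Ov \<pi> k x \<Longrightarrow> square_mod Ov \<pi> j x"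
  unfolding square_mod_def using pi_power_dvd_mono by blast

lemma square_mod_square: "y \<in> Ov \<Longrightarrow> square_mod Ov \<pi> k (y^2)"
  unfolding square_mod_def by (rule bexI[of _ y]) simp_all

lemma newton_step:
  assumes x: "x \<in> Ov" and y: "y \<in> Ov" "\<not> \<pi> dvd y" and n: "1 \<le> n" "\<pi>^n dvd x - y^2"
  shows "\<exists>y'\<in>Ov. \<not> \<pi> dvd y' \<and> \<pi>^Suc n dvd x - y'^2 \<and> \<pi>^n dvd y' - y"
proof -
  have "2 \<in> Ov" using Ov_add[OF Ov_1 Ov_1] by simp
  with y have "\<not> \<pi> dvd 2 * y" using pi_prime pi_not_dvd_2 by blast
  then obtain i where i: "i \<in> Ov" "2 * y * i = 1" using inverse_in_Ov \<open>2 \<in> Ov\<close> y by blast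
  define d where "d = x - y^2"
  have "d \<in> Ov" "\<pi>^n dvd d" using x y n unfolding d_def by auto
  \<comment> \<open>the Newton correction kills the error to first order\<close>
  have "x - (y + d * i)^2 = d - (2 * y * i) * d - (d * i)^2"
    unfolding d_def by (simp add: algebra_simps power2_eq_square)
  then have err: "x - (y + d * i)^2 = - ((d * i)^2)" using i by simp
  have "\<pi>^(n + n) dvd (d * i)^2"
    using \<open>\<pi>^n dvd d\<close> by (simp add: power_add power2_eq_square mult_dvd_mono)
  then have "\<pi>^Suc n dvd x - (y + d * i)^2"
    unfolding err using n pi_power_dvd_mono[of "Suc n" "n + n"] by simp
  moreover have "\<pi> dvd d * i" using \<open>\<pi>^n dvd d\<close> n pi_dvd_of_pi_power_dvd by auto
  then have "\<not> \<pi> dvd y + d * i" using y(2) by (metis dvd_add_left_iff)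
  moreover have "y + d * i \<in> Ov" using \<open>d \<in> Ov\<close> y i by auto
  ultimately show ?thesis using \<open>\<pi>^n dvd d\<close> by auto
qed

lemma pi_adic_limit:
  assumes Y: "\<And>n. Y n \<in> Ov" "\<And>n. \<pi>^n dvd Y (Suc n) - Y n"
  shows "\<exists>L\<in>Ov. \<forall>k. \<exists>N. \<forall>n\<ge>N. \<pi>^k dvd Y n - L"
proof -
  have tail: "\<pi>^N dvd Y m - Y N" if "N \<le> m" for m N
    using that
  proof (induction m rule: dec_induct)
    case (step m)
    then have "\<pi>^N dvd Y (Suc m) - Y m" using Y(2)[of m] pi_power_dvd_mono by blast
    with step.IH show ?case using dvd_diff_trans by blast
  qed simp
  have "\<pi>^k dvd Y m - Y n" if "k \<le> m" "k \<le> n" for k m n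
    using tail[OF that(1)] tail[OF that(2)] by (meson dvd_diff_swap dvd_diff_trans)
  then have "\<forall>k. \<exists>N. \<forall>m\<ge>N. \<forall>n\<ge>N. \<pi>^k dvd Y m - Y n" by blast
  with Y(1) Ov_complete show ?thesis unfolding pi_adically_complete_def by blast
qed

lemma unit_square_mod_pi_is_square:
  assumes x: "x \<in> Ov" "\<not> \<pi> dvd x" and sq: "square_mod Ov \<pi> 1 x"
  shows "\<exists>y\<in>Ov. y^2 = x"
proof -
  let ?P = "\<lambda>n y. y \<in> Ov \<and> \<not> \<pi> dvd y \<and> \<pi>^Suc n dvd x - y^2"
  obtain y0 where y0: "y0 \<in> Ov" "\<pi> dvd x - y0^2" using sq unfolding square_mod_def by auto
  have "\<not> \<pi> dvd y0"
    using x(2) y0 by (metis dvd_add dvd_mult power2_eq_square diff_add_cancel)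
  then have "\<exists>y. ?P 0 y" using y0 by auto
  moreover have "\<exists>y'. ?P (Suc n) y' \<and> \<pi>^Suc n dvd y' - y" if "?P n y" for n y
    using newton_step[OF x(1), of y "Suc n"] that by auto
  ultimately obtain Y where Y: "\<And>n. ?P n (Y n)" "\<And>n. \<pi>^Suc n dvd Y (Suc n) - Y n"
    using dependent_nat_choice[of ?P "\<lambda>n y y'. \<pi>^Suc n dvd y' - y"] by blast
  have "\<pi>^n dvd Y (Suc n) - Y n" for n
    using Y(2) pi_power_dvd_mono[of n "Suc n"] by auto
  then obtain L where L: "L \<in> Ov" "\<forall>k. \<exists>N. \<forall>n\<ge>N. \<pi>^k dvd Y n - L"
    using pi_adic_limit Y(1) by blast
  have "\<pi>^k dvd x - L^2" for k
  proof -
    obtain N where N: "\<forall>n\<ge>N. \<pi>^k dvd Y n - L" using L by blast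
    define n where "n = max N k"
    have "\<pi>^k dvd Y n - L" using N unfolding n_def by simp
    moreover have "\<pi>^k dvd x - (Y n)^2"
      using Y(1)[of n] pi_power_dvd_mono[of k "Suc n"] unfolding n_def by auto
    ultimately have "\<pi>^k dvd (x - (Y n)^2) + (Y n - L) * (Y n + L)"
      by (simp add: dvd_add)
    then show ?thesis by (simp add: algebra_simps power2_eq_square)
  qed
  then have "x - L^2 = 0" using Ov_eq_0_of_pi_power_dvd x L by blast
  with L show ?thesis by auto
qed

lemma square_mod_of_square_mod_pi:
  "x \<in> Ov \<Longrightarrow> \<not> \<pi> dvd x \<Longrightarrow> square_mod Ov \<pi> 1 x \<Longrightarrow> square_mod Ov \<pi> n x"
  using unit_square_mod_pi_is_square square_mod_square by blast

lemma theta_sq_not_square_mod_pi: "\<not> square_mod Ov \<pi> 1 (\<theta>^2)"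
proof -
  have "\<not> \<pi> dvd \<theta>^2" using theta_sq_unit pi_not_dvd_unit unfolding unit_in_def by blast
  then show ?thesis using unit_square_mod_pi_is_square[OF theta_sq_in_Ov] theta_sq_not_square by blast
qed

lemma square_mod_pi_transfer:
  assumes ab: "a \<in> Ov" "b \<in> Ov" and w: "w \<in> Ov" "\<not> \<pi> dvd w" and d: "\<pi> dvd b - a * w^2"
  shows "square_mod Ov \<pi> 1 a \<longleftrightarrow> square_mod Ov \<pi> 1 b"
proof
  assume "square_mod Ov \<pi> 1 a"
  then obtain s where s: "s \<in> Ov" "\<pi> dvd a - s^2" unfolding square_mod_def by auto
  then have "\<pi> dvd (b - a * w^2) + (a - s^2) * w^2" using d by (simp add: dvd_add)
  then have "\<pi> dvd b - (s * w)^2" by (simp add: algebra_simps power2_eq_square)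
  then show "square_mod Ov \<pi> 1 b" unfolding square_mod_def using s w by auto
next
  assume "square_mod Ov \<pi> 1 b"
  then obtain y where y: "y \<in> Ov" "\<pi> dvd b - y^2" unfolding square_mod_def by auto
  obtain v where v: "v \<in> Ov" "w * v = 1" using inverse_in_Ov w by blast
  have "a = a * (w * v)^2" using v by simp
  then have "a - (y * v)^2 = v^2 * ((b - y^2) - (b - a * w^2))"
    by (simp add: algebra_simps power2_eq_square)
  moreover have "\<pi> dvd v^2 * ((b - y^2) - (b - a * w^2))" by (rule dvd_mult, rule dvd_diff[OF y(2) d])
  ultimately have "\<pi> dvd a - (y * v)^2" by (simp only:)
  then show "square_mod Ov \<pi> 1 a" unfolding square_mod_def using y v by auto
qed

lemma pi_dvd_of_square_classes_differ:
  assumes a: "a \<in> Ov" "\<not> \<pi> dvd a" and b: "b \<in> Ov" and w: "w \<in> Ov" and d: "\<pi> dvd b - a * w^2"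
    and classes: "\<pi> dvd b \<or> (square_mod Ov \<pi> 1 a \<longleftrightarrow> \<not> square_mod Ov \<pi> 1 b)"
  shows "\<pi> dvd w"
proof (cases "\<pi> dvd b")
  case True
  then have "\<pi> dvd a * w^2" using d by (metis dvd_diff_right_iff minus_diff_eq dvd_minus_iff)
  then show ?thesis using pi_prime a w pi_dvd_square by blast
next
  case False
  then show ?thesis using square_mod_pi_transfer[OF a(1) b w _ d] classes by blast
qed

lemma norm_form_anisotropic_mod_pi:
  assumes n: "n \<in> Ov" "\<not> square_mod Ov \<pi> 1 n" and uv: "u \<in> Ov" "v \<in> Ov"
    and d: "\<pi> dvd u^2 - n * v^2"
  shows "\<pi> dvd u \<and> \<pi> dvd v"
proof -
  have "\<not> \<pi> dvd n" using n square_mod_square[of 0 1] unfolding square_mod_def by auto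
  then have "\<pi> dvd v"
    using pi_dvd_of_square_classes_differ[OF n(1) _ _ uv(2) d] n(2) uv square_mod_square by auto
  then have "\<pi> dvd u^2" using d by (metis dvd_diff_right_iff dvd_mult dvd_mult_left power2_eq_square dvd_diff_swap)
  then show ?thesis using pi_dvd_square uv \<open>\<pi> dvd v\<close> by auto
qed

abbreviation R where "R u \<equiv> Rset u Ov"
abbreviation G where "G u k \<equiv> Gset u Ov \<pi> gal k"
abbreviation K where "K u l i \<equiv> Kgrp u Ov \<pi> gal l i"
abbreviation mc where "mc k \<equiv> mcong \<pi> k"
abbreviation mi where "mi u k \<equiv> minv u Ov \<pi> k"
abbreviation conjg where "conjg u l g X \<equiv> mmul (mmul g X) (mi u l g)"
abbreviation Amat where "Amat u c \<equiv> M2 0 (eps u \<theta> * c) (eps u \<theta>) 0"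

lemma Rset_add: "x \<in> R u \<Longrightarrow> y \<in> R u \<Longrightarrow> x + y \<in> R u"
  and Rset_mult: "x \<in> R u \<Longrightarrow> y \<in> R u \<Longrightarrow> x * y \<in> R u"
  and Rset_Ov: "x \<in> Ov \<Longrightarrow> x \<in> R u"
  unfolding Rset_def by auto

lemma entries_mmul: "entries A \<subseteq> R u \<Longrightarrow> entries B \<subseteq> R u \<Longrightarrow> entries (mmul A B) \<subseteq> R u"
  by (cases A; cases B) (auto intro!: Rset_add Rset_mult)

lemma entries_mone: "entries mone \<subseteq> R u"
  by (auto simp: mone_def intro: Rset_Ov)

lemma entries_Amat: "c \<in> Ov \<Longrightarrow> entries (Amat u c) \<subseteq> R u"
  unfolding Rset_def eps_def by auto

lemma mtrace_in_Rset: "entries X \<subseteq> R u \<Longrightarrow> mtrace X \<in> R u"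
  by (cases X) (auto intro: Rset_add)

lemma mstar_M2 [simp]: "mstar gal (M2 a b c d) = M2 (gal d) (gal b) (gal c) (gal a)"
  by (simp add: mstar_def Wmat_def)

lemma mstar_mmul: "mstar gal (mmul A B) = mmul (mstar gal B) (mstar gal A)"
  by (cases A; cases B) (simp add: algebra_simps)

lemma mstar_msmult: "mstar gal (msmult s A) = msmult (gal s) (mstar gal A)"
  by (cases A) simp

lemma mstar_mstar [simp]: "mstar gal (mstar gal A) = A"
  by (cases A) simp

lemma mstar_mone [simp]: "mstar gal mone = mone"
  by (simp add: mone_def)

lemma mstar_mcong: "mc k A B \<Longrightarrow> mc k (mstar gal A) (mstar gal B)"
proof (cases A; cases B)
  fix a b c d e f g h assume "mc k A B" "A = M2 a b c d" "B = M2 e f g h"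
  then show ?thesis using gal_pi_power_dvd[of k "a - e"] gal_pi_power_dvd[of k "b - f"]
      gal_pi_power_dvd[of k "c - g"] gal_pi_power_dvd[of k "d - h"]
    by simp
qed

lemma G_iff: "g \<in> G u k \<longleftrightarrow> entries g \<subseteq> R u \<and>
    (\<exists>h. entries h \<subseteq> R u \<and> mc k (mmul g h) mone \<and> mc k (mmul h g) mone) \<and>
    (u \<longrightarrow> mc k (mmul (mstar gal g) g) mone)"
  unfolding Gset_def by simp

lemma right_inverse_unique:
  assumes "mc k (mmul g h0) mone" "mc k (mmul h0 g) mone" "mc k (mmul g h) mone"
  shows "mc k h h0" "mc k (mmul h g) mone"
proof -
  have "mc k h (mmul (mmul h0 g) h)" using mcong_mmul_right[OF mcong_sym[OF assms(2)], of h] by simp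
  also have "mmul (mmul h0 g) h = mmul h0 (mmul g h)" by (simp add: mmul_assoc)
  also have "mc k \<dots> (mmul h0 mone)" by (rule mcong_mmul_left[OF assms(3)])
  finally show hh: "mc k h h0" by simp
  have "mc k (mmul h g) (mmul h0 g)" by (rule mcong_mmul_right[OF hh])
  also have "mc k \<dots> mone" by (rule assms(2))
  finally show "mc k (mmul h g) mone" .
qed

lemma mstar_eq_right_inverse:
  assumes "mc k (mmul (mstar gal g) g) mone" "mc k (mmul g h) mone"
  shows "mc k (mstar gal g) h"
proof -
  have "mc k (mstar gal g) (mmul (mstar gal g) (mmul g h))"
    using mcong_mmul_left[OF mcong_sym[OF assms(2)], of "mstar gal g"] by simp
  also have "mmul (mstar gal g) (mmul g h) = mmul (mmul (mstar gal g) g) h" by (simp add: mmul_assoc)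
  also have "mc k \<dots> (mmul mone h)" by (rule mcong_mmul_right[OF assms(1)])
  finally show ?thesis by simp
qed

lemma G_right_inverse:
  assumes g: "g \<in> G u k" and h: "entries h \<subseteq> R u" "mc k (mmul g h) mone"
  shows "h \<in> G u k" "mc k (mmul h g) mone"
proof -
  obtain h0 where h0: "mc k (mmul g h0) mone" "mc k (mmul h0 g) mone"
    using g unfolding G_iff by blast
  show hg: "mc k (mmul h g) mone" using right_inverse_unique[OF h0 h(2)] by simp
  have "mc k (mmul (mstar gal h) h) mone" if u
  proof -
    have "mc k (mstar gal g) h" using g that h(2) mstar_eq_right_inverse unfolding G_iff by blast
    then have "mc k (mstar gal h) g" using mstar_mcong mcong_sym by fastforce
    then have "mc k (mmul (mstar gal h) h) (mmul g h)" by (rule mcong_mmul_right)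
    then show ?thesis using h(2) mcong_trans by blast
  qed
  then show "h \<in> G u k" using h hg g unfolding G_iff by blast
qed

lemma G_entries: "g \<in> G u k \<Longrightarrow> entries g \<subseteq> R u"
  unfolding G_iff by blast

lemma G_mone: "mone \<in> G u k"
  unfolding G_iff using entries_mone[of u] by (auto intro!: exI[of _ mone])

lemma G_mmul: assumes g1: "g1 \<in> G u k" and g2: "g2 \<in> G u k" shows "mmul g1 g2 \<in> G u k"
proof -
  obtain h1 where h1: "entries h1 \<subseteq> R u" "mc k (mmul g1 h1) mone" "mc k (mmul h1 g1) mone"
    using g1 unfolding G_iff by blast
  obtain h2 where h2: "entries h2 \<subseteq> R u" "mc k (mmul g2 h2) mone" "mc k (mmul h2 g2) mone"
    using g2 unfolding G_iff by blast
  have "mmul (mmul g1 g2) (mmul h2 h1) = mmul g1 (mmul (mmul g2 h2) h1)" by (simp add: mmul_assoc)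
  also have "mc k \<dots> (mmul g1 (mmul mone h1))" by (intro mcong_mmul_left mcong_mmul_right h2)
  finally have right: "mc k (mmul (mmul g1 g2) (mmul h2 h1)) mone" using h1 by (simp add: mcong_trans)
  have "mmul (mmul h2 h1) (mmul g1 g2) = mmul h2 (mmul (mmul h1 g1) g2)" by (simp add: mmul_assoc)
  also have "mc k \<dots> (mmul h2 (mmul mone g2))" by (intro mcong_mmul_left mcong_mmul_right h1)
  finally have left: "mc k (mmul (mmul h2 h1) (mmul g1 g2)) mone" using h2 by (simp add: mcong_trans)
  have "mc k (mmul (mstar gal (mmul g1 g2)) (mmul g1 g2)) mone" if u
  proof -
    have s1: "mc k (mmul (mstar gal g1) g1) mone" and s2: "mc k (mmul (mstar gal g2) g2) mone"
      using g1 g2 \<open>u\<close> unfolding G_iff by auto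
    have "mmul (mstar gal (mmul g1 g2)) (mmul g1 g2) = mmul (mstar gal g2) (mmul (mmul (mstar gal g1) g1) g2)"
      by (simp add: mstar_mmul mmul_assoc)
    also have "mc k \<dots> (mmul (mstar gal g2) (mmul mone g2))" by (intro mcong_mmul_left mcong_mmul_right s1)
    finally show ?thesis using s2 by (simp add: mcong_trans)
  qed
  then show ?thesis unfolding G_iff
    using G_entries[OF g1] G_entries[OF g2] entries_mmul right left entries_mmul[OF h2(1) h1(1)] by blast
qed

lemma minv:
  assumes g: "g \<in> G u k"
  shows "entries (mi u k g) \<subseteq> R u" "mc k (mmul g (mi u k g)) mone" "mc k (mmul (mi u k g) g) mone"
    "mi u k g \<in> G u k"
proof -
  obtain h0 where "entries h0 \<subseteq> R u" "mc k (mmul g h0) mone"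
    using g unfolding G_iff by blast
  then have "entries (mi u k g) \<subseteq> R u \<and> mc k (mmul g (mi u k g)) mone"
    unfolding minv_def by (rule someI[where P = "\<lambda>h. entries h \<subseteq> R u \<and> mc k (mmul g h) mone", OF conjI])
  then show inv: "entries (mi u k g) \<subseteq> R u" "mc k (mmul g (mi u k g)) mone" by auto
  show "mc k (mmul (mi u k g) g) mone" "mi u k g \<in> G u k" using G_right_inverse[OF g inv] by auto
qed

lemma minv_unique: "g \<in> G u k \<Longrightarrow> mc k (mmul g h) mone \<Longrightarrow> mc k h (mi u k g)"
  using right_inverse_unique(1)[OF minv(2,3)] by blast

lemma minv_mmul:
  assumes g1: "g1 \<in> G u k" and g2: "g2 \<in> G u k"
  shows "mc k (mi u k (mmul g1 g2)) (mmul (mi u k g2) (mi u k g1))"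
proof -
  have "mmul (mmul g1 g2) (mmul (mi u k g2) (mi u k g1)) = mmul g1 (mmul (mmul g2 (mi u k g2)) (mi u k g1))"
    by (simp add: mmul_assoc)
  also have "mc k \<dots> (mmul g1 (mmul mone (mi u k g1)))" by (intro mcong_mmul_left mcong_mmul_right minv g2)
  finally have "mc k (mmul (mmul g1 g2) (mmul (mi u k g2) (mi u k g1))) mone"
    using minv(2)[OF g1] by (simp add: mcong_trans)
  then show ?thesis using minv_unique[OF G_mmul[OF g1 g2]] mcong_sym by blast
qed

lemma conjg_intertwines: "g \<in> G u l \<Longrightarrow> mc l (mmul g A) (mmul (conjg u l g A) g)"
proof -
  assume g: "g \<in> G u l"
  have "mmul (conjg u l g A) g = mmul (mmul g A) (mmul (mi u l g) g)" by (simp add: mmul_assoc)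
  also have "mc l \<dots> (mmul (mmul g A) mone)" by (intro mcong_mmul_left minv(3)[OF g])
  finally show ?thesis by (simp add: mcong_sym)
qed

lemma similar_mtrace_det2:
  assumes "mc k (mmul g A) (mmul B g)" "mc k (mmul g h) mone" "mc k (mmul h g) mone"
  shows "\<pi>^k dvd mtrace A - mtrace B" "\<pi>^k dvd det2 A - det2 B"
proof -
  have "mc k B (mmul B (mmul g h))" using mcong_mmul_left[OF mcong_sym[OF assms(2)], of B] by simp
  also have "mmul B (mmul g h) = mmul (mmul B g) h" by (simp add: mmul_assoc)
  also have "mc k \<dots> (mmul (mmul g A) h)" by (intro mcong_mmul_right mcong_sym[OF assms(1)])
  finally have B: "mc k (mmul (mmul g A) h) B" by (rule mcong_sym)
  have "mtrace (mmul (mmul g A) h) = mtrace (mmul A (mmul h g))"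
    by (metis mmul_assoc mtrace_mmul_commute)
  moreover have "\<pi>^k dvd mtrace (mmul A (mmul h g)) - mtrace A"
    using mcong_mtrace[OF mcong_mmul_left[OF assms(3)]] by simp
  ultimately show "\<pi>^k dvd mtrace A - mtrace B"
    using mcong_mtrace[OF B] by (metis dvd_diff_swap dvd_diff_trans)
  have "det2 (mmul (mmul g A) h) = det2 A * det2 (mmul g h)" by (simp add: det2_mmul)
  moreover have "\<pi>^k dvd det2 (mmul g h) - 1" using mcong_det2[OF assms(2)] by (simp add: mone_def)
  then have "\<pi>^k dvd det2 A * det2 (mmul g h) - det2 A * 1"
    by (metis dvd_mult right_diff_distrib)
  ultimately show "\<pi>^k dvd det2 A - det2 B"
    using mcong_det2[OF B] by (metis dvd_diff_swap dvd_diff_trans mult_1_right)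
qed

lemma conj_mtrace_det2:
  assumes g: "g \<in> G u l"
  shows "\<pi>^l dvd mtrace A - mtrace (conjg u l g A)" "\<pi>^l dvd det2 A - det2 (conjg u l g A)"
  using similar_mtrace_det2[OF conjg_intertwines[OF g] minv(2,3)[OF g]] by auto

subsection \<open>Stabilizers of the characters psi_A\<close>

lemma conj_mone_plus:
  assumes g: "g \<in> G u l" and k: "mc l k (madd mone (msmult s B))"
  shows "mc l (conjg u l g k) (madd mone (msmult s (conjg u l g B)))"
proof -
  have "mc l (conjg u l g k) (conjg u l g (madd mone (msmult s B)))"
    by (intro mcong_mmul_right mcong_mmul_left k)
  also have "conjg u l g (madd mone (msmult s B)) = madd (mmul g (mi u l g)) (msmult s (conjg u l g B))"
    by (rule mmul_conj_expand)
  also have "mc l \<dots> (madd mone (msmult s (conjg u l g B)))"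
    by (intro mcong_madd minv(2)[OF g] mcong_refl)
  finally show ?thesis .
qed

lemma conj_Kgrp: assumes g: "g \<in> G u l" and k: "k \<in> K u l i" shows "conjg u l g k \<in> K u l i"
proof -
  obtain B where B: "entries B \<subseteq> R u" "mc l k (madd mone (msmult (\<pi>^i) B))" "k \<in> G u l"
    using k unfolding Kgrp_def by blast
  have "conjg u l g k \<in> G u l" by (intro G_mmul minv(4) g B(3))
  moreover have "entries (conjg u l g B) \<subseteq> R u"
    by (intro entries_mmul G_entries[OF g] B(1) minv(1)[OF g])
  ultimately show ?thesis using conj_mone_plus[OF g B(2)] unfolding Kgrp_def by blast
qed

lemma mcong_cancel_pi_power:
  assumes "mc (i + j) (madd mone (msmult (\<pi>^i) X)) (madd mone (msmult (\<pi>^i) Y))"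
  shows "mc j X Y"
proof -
  have cancel: "\<pi>^(i + j) dvd (c + \<pi>^i * x) - (c + \<pi>^i * y) \<Longrightarrow> \<pi>^j dvd x - y" for c x y
  proof -
    assume "\<pi>^(i + j) dvd (c + \<pi>^i * x) - (c + \<pi>^i * y)"
    then have "\<pi>^i * \<pi>^j dvd \<pi>^i * (x - y)" by (simp add: power_add algebra_simps)
    then show ?thesis using pi_nonzero by simp
  qed
  show ?thesis
    using assms cancel[of 1] cancel[of 0] by (cases X; cases Y) (simp add: mone_def del: add_0)
qed

lemma psi_pi_power_cong:
  assumes psi: "good_character u Ov \<pi> l \<psi>" and xy: "x \<in> R u" "y \<in> R u"
    and d: "\<pi>^floor_half l dvd x - y"
  shows "\<psi> (\<pi>^ceil_half l * x) = \<psi> (\<pi>^ceil_half l * y)"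
proof -
  have "\<pi>^ceil_half l * \<pi>^floor_half l dvd \<pi>^ceil_half l * (x - y)"
    using d by (rule mult_dvd_mono[OF dvd_refl])
  moreover have "ceil_half l + floor_half l = l" by (simp add: ceil_half_def floor_half_def)
  ultimately have "\<pi>^l dvd \<pi>^ceil_half l * x - \<pi>^ceil_half l * y"
    by (metis power_add right_diff_distrib)
  moreover have "\<pi>^ceil_half l \<in> R u" using pi_in_Ov by (intro Rset_Ov Ov_power)
  ultimately show ?thesis
    using psi xy Rset_mult unfolding good_character_def by blast
qed

lemma psiA_eq:
  assumes psi: "good_character u Ov \<pi> l \<psi>" and A: "entries A \<subseteq> R u"
    and B: "entries B \<subseteq> R u" "mc l k (madd mone (msmult (\<pi>^ceil_half l) B))"
  shows "psiA u Ov \<pi> l \<psi> A k = \<psi> (\<pi>^ceil_half l * mtrace (mmul A B))"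
proof -
  let ?P = "\<lambda>B. entries B \<subseteq> R u \<and> mc l k (madd mone (msmult (\<pi>^ceil_half l) B))"
  have B': "?P (Eps ?P)" using B by (rule someI[of ?P, OF conjI])
  then have "mc l (madd mone (msmult (\<pi>^ceil_half l) (Eps ?P))) (madd mone (msmult (\<pi>^ceil_half l) B))"
    using B(2) by (meson mcong_sym mcong_trans)
  moreover have "ceil_half l + floor_half l = l" by (simp add: ceil_half_def floor_half_def)
  ultimately have "mc (ceil_half l + floor_half l) (madd mone (msmult (\<pi>^ceil_half l) (Eps ?P)))
      (madd mone (msmult (\<pi>^ceil_half l) B))"
    by simp
  then have "mc (floor_half l) (Eps ?P) B" by (rule mcong_cancel_pi_power)
  then have "\<pi>^floor_half l dvd mtrace (mmul A (Eps ?P)) - mtrace (mmul A B)"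
    by (intro mcong_mtrace mcong_mmul_left)
  with B' have "\<psi> (\<pi>^ceil_half l * mtrace (mmul A (Eps ?P))) = \<psi> (\<pi>^ceil_half l * mtrace (mmul A B))"
    by (intro psi_pi_power_cong[OF psi] mtrace_in_Rset entries_mmul A B(1)) auto
  then show ?thesis unfolding psiA_def Let_def .
qed

lemma floor_half_le: "floor_half l \<le> l"
  by (simp add: floor_half_def)

text \<open>Conjugation changes the trace pairing only modulo pi^l1, which psi cannot see after
  multiplication by pi^l2.\<close>
lemma stabS_of_centralizes:
  assumes psi: "good_character u Ov \<pi> l \<psi>" and A: "entries A \<subseteq> R u" and g: "g \<in> G u l"
    and c: "mc (floor_half l) (mmul g A) (mmul A g)"
  shows "g \<in> stabS u Ov \<pi> gal l \<psi> A"
proof -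
  let ?gi = "mi u l g"
  have "psiA u Ov \<pi> l \<psi> A (conjg u l g k) = psiA u Ov \<pi> l \<psi> A k" if k: "k \<in> K u l (ceil_half l)" for k
  proof -
    obtain B where B: "entries B \<subseteq> R u" "mc l k (madd mone (msmult (\<pi>^ceil_half l) B))"
      using k unfolding Kgrp_def by blast
    have B': "entries (conjg u l g B) \<subseteq> R u"
      by (intro entries_mmul G_entries[OF g] B(1) minv(1)[OF g])
    have "mmul (mmul ?gi A) g = mmul ?gi (mmul A g)" by (simp add: mmul_assoc)
    also have "mc (floor_half l) \<dots> (mmul ?gi (mmul g A))" by (intro mcong_mmul_left mcong_sym[OF c])
    also have "mmul ?gi (mmul g A) = mmul (mmul ?gi g) A" by (simp add: mmul_assoc)
    also have "mc (floor_half l) \<dots> (mmul mone A)"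
      by (intro mcong_mmul_right mcong_mono[OF floor_half_le] minv(3)[OF g])
    finally have "mc (floor_half l) (mmul (mmul (mmul ?gi A) g) B) (mmul A B)"
      by (simp add: mcong_mmul_right)
    then have "\<pi>^floor_half l dvd mtrace (mmul (mmul (mmul ?gi A) g) B) - mtrace (mmul A B)"
      by (rule mcong_mtrace)
    moreover have "mtrace (mmul A (conjg u l g B)) = mtrace (mmul (mmul (mmul ?gi A) g) B)"
    proof -
      have "mtrace (mmul A (conjg u l g B)) = mtrace (mmul (mmul (mmul A g) B) ?gi)"
        by (simp add: mmul_assoc)
      also have "\<dots> = mtrace (mmul ?gi (mmul (mmul A g) B))" by (rule mtrace_mmul_commute)
      also have "\<dots> = mtrace (mmul (mmul (mmul ?gi A) g) B)" by (simp add: mmul_assoc)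
      finally show ?thesis .
    qed
    ultimately have "\<pi>^floor_half l dvd mtrace (mmul A (conjg u l g B)) - mtrace (mmul A B)"
      by simp
    moreover have "mtrace (mmul A (conjg u l g B)) \<in> R u" "mtrace (mmul A B) \<in> R u"
      using A B(1) B' by (simp_all add: mtrace_in_Rset entries_mmul)
    ultimately have "\<psi> (\<pi>^ceil_half l * mtrace (mmul A (conjg u l g B))) = \<psi> (\<pi>^ceil_half l * mtrace (mmul A B))"
      using psi_pi_power_cong[OF psi] by blast
    then show ?thesis
      using psiA_eq[OF psi A B] psiA_eq[OF psi A B' conj_mone_plus[OF g B(2)]] by simp
  qed
  then show ?thesis unfolding stabS_def using g by blast
qed

lemma psiA_mcong: "mc l k k' \<Longrightarrow> psiA u Ov \<pi> l \<psi> A k = psiA u Ov \<pi> l \<psi> A k'"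
proof -
  assume "mc l k k'"
  then have "(\<lambda>B. entries B \<subseteq> R u \<and> mc l k (madd mone (msmult (\<pi>^ceil_half l) B))) =
      (\<lambda>B. entries B \<subseteq> R u \<and> mc l k' (madd mone (msmult (\<pi>^ceil_half l) B)))"
    by (meson mcong_sym mcong_trans)
  then show ?thesis unfolding psiA_def by simp
qed

lemma stabS_mmul:
  assumes g1: "g1 \<in> stabS u Ov \<pi> gal l \<psi> A" and g2: "g2 \<in> stabS u Ov \<pi> gal l \<psi> A"
  shows "mmul g1 g2 \<in> stabS u Ov \<pi> gal l \<psi> A"
proof -
  let ?P = "psiA u Ov \<pi> l \<psi> A"
  have G1: "g1 \<in> G u l" and G2: "g2 \<in> G u l" using g1 g2 unfolding stabS_def by auto
  have s1: "\<And>k. k \<in> K u l (ceil_half l) \<Longrightarrow> ?P (conjg u l g1 k) = ?P k"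
    and s2: "\<And>k. k \<in> K u l (ceil_half l) \<Longrightarrow> ?P (conjg u l g2 k) = ?P k"
    using g1 g2 unfolding stabS_def by auto
  have "?P (conjg u l (mmul g1 g2) k) = ?P k" if k: "k \<in> K u l (ceil_half l)" for k
  proof -
    have "mc l (conjg u l (mmul g1 g2) k) (mmul (mmul (mmul g1 g2) k) (mmul (mi u l g2) (mi u l g1)))"
      by (intro mcong_mmul_left minv_mmul G1 G2)
    also have "mmul (mmul (mmul g1 g2) k) (mmul (mi u l g2) (mi u l g1)) = conjg u l g1 (conjg u l g2 k)"
      by (simp add: mmul_assoc)
    finally have "?P (conjg u l (mmul g1 g2) k) = ?P (conjg u l g1 (conjg u l g2 k))"
      by (rule psiA_mcong)
    also have "\<dots> = ?P k" using s1[OF conj_Kgrp[OF G2 k]] s2[OF k] by simp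
    finally show ?thesis .
  qed
  then show ?thesis unfolding stabS_def using G_mmul[OF G1 G2] by blast
qed

lemma double_coset_subset:
  assumes c1: "c1 \<in> stabS u Ov \<pi> gal l \<psi> A1" and c2: "c2 \<in> stabS u Ov \<pi> gal l \<psi> A2"
    and h: "mc l h (mmul (mmul c1 g) c2)"
  shows "double_coset u Ov \<pi> gal l (stabS u Ov \<pi> gal l \<psi> A1) h (stabS u Ov \<pi> gal l \<psi> A2)
      \<subseteq> double_coset u Ov \<pi> gal l (stabS u Ov \<pi> gal l \<psi> A1) g (stabS u Ov \<pi> gal l \<psi> A2)"
proof
  fix m assume "m \<in> double_coset u Ov \<pi> gal l (stabS u Ov \<pi> gal l \<psi> A1) h (stabS u Ov \<pi> gal l \<psi> A2)"
  then obtain s1 s2 where m: "m \<in> G u l" "s1 \<in> stabS u Ov \<pi> gal l \<psi> A1" "s2 \<in> stabS u Ov \<pi> gal l \<psi> A2"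
    "mc l m (mmul (mmul s1 h) s2)" unfolding double_coset_def by blast
  note m(4)
  also have "mc l (mmul (mmul s1 h) s2) (mmul (mmul s1 (mmul (mmul c1 g) c2)) s2)"
    by (intro mcong_mmul_right mcong_mmul_left h)
  also have "mmul (mmul s1 (mmul (mmul c1 g) c2)) s2 = mmul (mmul (mmul s1 c1) g) (mmul c2 s2)"
    by (simp only: mmul_assoc)
  finally show "m \<in> double_coset u Ov \<pi> gal l (stabS u Ov \<pi> gal l \<psi> A1) g (stabS u Ov \<pi> gal l \<psi> A2)"
    unfolding double_coset_def using m(1) stabS_mmul[OF m(2) c1] stabS_mmul[OF c2 m(3)] by blast
qed

subsection \<open>The centralizer of a cuspidal element\<close>

text \<open>The two eigenspaces Ov and theta Ov of gal, modulo pi^k.\<close>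
definition real_mod :: "nat \<Rightarrow> 'a \<Rightarrow> bool" where
  "real_mod k x \<longleftrightarrow> (\<exists>x0\<in>Ov. \<pi>^k dvd x - x0)"

definition imag_mod :: "nat \<Rightarrow> 'a \<Rightarrow> bool" where
  "imag_mod k x \<longleftrightarrow> (\<exists>x0\<in>Ov. \<pi>^k dvd x - \<theta> * x0)"

lemma real_mod_of_gal: assumes "\<pi>^k dvd x - gal x" shows "real_mod k x"
proof -
  obtain p q where pq: "p \<in> Ov" "q \<in> Ov" "x = p + q * \<theta>" by (rule theta_decomp)
  then have "x - gal x = \<theta> * (2 * q)" by (simp add: gal_basis algebra_simps)
  with assms have "\<pi>^k dvd q" using dvd_cancel_theta dvd_cancel_2 by metis
  then show ?thesis unfolding real_mod_def using pq by (metis add_diff_cancel_left' dvd_mult2)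
qed

lemma imag_mod_of_gal: assumes "\<pi>^k dvd x + gal x" shows "imag_mod k x"
proof -
  obtain p q where pq: "p \<in> Ov" "q \<in> Ov" "x = p + q * \<theta>" by (rule theta_decomp)
  then have "x + gal x = 2 * p" by (simp add: gal_basis algebra_simps)
  with assms have "\<pi>^k dvd p" using dvd_cancel_2 by metis
  moreover have "x - \<theta> * q = p" using pq by (simp add: algebra_simps)
  ultimately show ?thesis unfolding imag_mod_def using pq by metis
qed

lemma real_mod_add: "real_mod k x \<Longrightarrow> real_mod k y \<Longrightarrow> real_mod k (x + y)"
  unfolding real_mod_def by (metis dvd_diff_add Ov_add)

lemma real_mod_diff: "real_mod k x \<Longrightarrow> real_mod k y \<Longrightarrow> real_mod k (x - y)"
  unfolding real_mod_def by (metis dvd_diff_diff Ov_diff)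

lemma imag_mod_diff: "imag_mod k x \<Longrightarrow> imag_mod k y \<Longrightarrow> imag_mod k (x - y)"
  unfolding imag_mod_def by (metis dvd_diff_diff Ov_diff right_diff_distrib)

lemma imag_mod_mult_Ov: assumes "a \<in> Ov" "imag_mod k x" shows "imag_mod k (a * x)"
proof -
  obtain x0 where "x0 \<in> Ov" "\<pi>^k dvd x - \<theta> * x0" using assms unfolding imag_mod_def by blast
  moreover have "a * x - \<theta> * (a * x0) = a * (x - \<theta> * x0)" by (simp add: algebra_simps)
  ultimately show ?thesis unfolding imag_mod_def using assms by (metis Ov_mult dvd_mult)
qed

lemma real_mod_theta_mult: assumes "imag_mod k x" shows "real_mod k (\<theta> * x)"
proof -
  obtain x0 where "x0 \<in> Ov" "\<pi>^k dvd x - \<theta> * x0" using assms unfolding imag_mod_def by blast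
  moreover have "\<theta> * x - \<theta>^2 * x0 = \<theta> * (x - \<theta> * x0)" by (simp add: algebra_simps power2_eq_square)
  ultimately show ?thesis unfolding real_mod_def by (metis Ov_mult theta_sq_in_Ov dvd_mult)
qed

lemma imag_mod_theta_mult: assumes "real_mod k x" shows "imag_mod k (\<theta> * x)"
proof -
  obtain x0 where "x0 \<in> Ov" "\<pi>^k dvd x - x0" using assms unfolding real_mod_def by blast
  moreover have "\<theta> * x - \<theta> * x0 = \<theta> * (x - x0)" by (simp add: algebra_simps)
  ultimately show ?thesis unfolding imag_mod_def by (metis dvd_mult)
qed

text \<open>X = U I + V (0, a; 1, 0) commutes with Amat u a.  In the unitary case, U real and V
  imaginary make X^star X = (U^2 - a V^2) I scalar, so that a rescaling of X is unitary.\<close>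
definition admissible_coords :: "bool \<Rightarrow> nat \<Rightarrow> 'a \<Rightarrow> 'a \<Rightarrow> bool" where
  "admissible_coords u k U V \<longleftrightarrow> (if u then real_mod k U \<and> imag_mod k V else U \<in> Ov \<and> V \<in> Ov)"

text \<open>The entry alpha of a matrix Amat of type cus, resp. of type ss or sns, read off modulo pi.\<close>
definition cuspidal_entry :: "bool \<Rightarrow> 'a \<Rightarrow> bool" where
  "cuspidal_entry u a \<longleftrightarrow> a \<in> Ov \<and> \<not> \<pi> dvd a \<and>
     (if u then square_mod Ov \<pi> 1 a else \<not> square_mod Ov \<pi> 1 a)"

definition split_entry :: "bool \<Rightarrow> 'a \<Rightarrow> bool" where
  "split_entry u b \<longleftrightarrow> b \<in> Ov \<and>
     (\<pi> dvd b \<or> (if u then \<not> square_mod Ov \<pi> 1 b else square_mod Ov \<pi> 1 b))"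

lemma cuspidal_split_square_classes:
  "cuspidal_entry u a \<Longrightarrow> split_entry u b \<Longrightarrow>
    \<pi> dvd b \<or> (square_mod Ov \<pi> 1 a \<longleftrightarrow> \<not> square_mod Ov \<pi> 1 b)"
  unfolding cuspidal_entry_def split_entry_def by (cases u) auto

lemma norm_form_anisotropic_mod_pi_unitary:
  assumes k: "1 \<le> k" and x: "real_mod k x" and y: "imag_mod k y"
    and a: "a \<in> Ov" "\<not> \<pi> dvd a" "square_mod Ov \<pi> 1 a" and d: "\<pi> dvd x^2 - a * y^2"
  shows "\<pi> dvd x \<and> \<pi> dvd y"
proof -
  obtain x0 where x0: "x0 \<in> Ov" "\<pi> dvd x - x0"
    using x k pi_dvd_of_pi_power_dvd unfolding real_mod_def by blast
  obtain y0 where y0: "y0 \<in> Ov" "\<pi> dvd y - \<theta> * y0"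
    using y k pi_dvd_of_pi_power_dvd unfolding imag_mod_def by blast
  obtain s where s: "s \<in> Ov" "\<pi> dvd a - s^2" using a unfolding square_mod_def by auto
  \<comment> \<open>reduce to the anisotropy of the norm form of the quadratic extension\<close>
  have "\<pi> dvd (x^2 - a * y^2) - (x0^2 - a * (\<theta> * y0)^2)"
    using x0 y0 unfolding power2_eq_square by (intro dvd_diff_diff dvd_diff_mult) simp_all
  with d have "\<pi> dvd (x0^2 - a * (\<theta> * y0)^2) + (a - s^2) * (\<theta> * y0)^2"
    by (metis dvd_add dvd_diff_right_iff dvd_mult2 s(2))
  then have "\<pi> dvd x0^2 - \<theta>^2 * (s * y0)^2" by (simp add: algebra_simps power2_eq_square)
  then have "\<pi> dvd x0" "\<pi> dvd s * y0"
    using norm_form_anisotropic_mod_pi[OF theta_sq_in_Ov theta_sq_not_square_mod_pi] x0 s y0 by auto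
  moreover have "\<not> \<pi> dvd s"
    using a(2) s by (metis dvd_add dvd_mult power2_eq_square diff_add_cancel)
  ultimately have "\<pi> dvd y0" using pi_prime s(1) y0(1) by blast
  then show ?thesis using x0 y0 \<open>\<pi> dvd x0\<close> by (metis dvd_add dvd_mult diff_add_cancel)
qed

lemma norm_dvd_imp_coords_dvd:
  assumes k: "1 \<le> k" and a: "cuspidal_entry u a" and UV: "admissible_coords u k U V"
    and d: "\<pi> dvd U * U - a * V * V"
  shows "\<pi> dvd U \<and> \<pi> dvd V"
proof -
  have d2: "\<pi> dvd U^2 - a * V^2" using d by (simp add: power2_eq_square algebra_simps)
  show ?thesis
  proof (cases u)
    case True
    then show ?thesis using norm_form_anisotropic_mod_pi_unitary[OF k _ _ _ _ _ d2] a UV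
      unfolding cuspidal_entry_def admissible_coords_def by auto
  next
    case False
    then show ?thesis using norm_form_anisotropic_mod_pi[OF _ _ _ _ d2] a UV
      unfolding cuspidal_entry_def admissible_coords_def by auto
  qed
qed

lemma conj_Amat_invariants:
  assumes g: "g \<in> G u l" and k: "k \<le> l" and M: "conjg u l g (Amat u b) = M2 m1 m2 m3 m4"
  shows "\<pi>^k dvd m1 + m4" "\<pi>^k dvd eps u \<theta> * b * eps u \<theta> + (m1 * m4 - m2 * m3)"
proof -
  have "\<pi>^l dvd 0 - (m1 + m4)" "\<pi>^l dvd (0 * 0 - eps u \<theta> * b * eps u \<theta>) - (m1 * m4 - m2 * m3)"
    using conj_mtrace_det2[OF g, of "Amat u b"] M by auto
  then show "\<pi>^k dvd m1 + m4" "\<pi>^k dvd eps u \<theta> * b * eps u \<theta> + (m1 * m4 - m2 * m3)"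
    using pi_power_dvd_mono[OF k] by (auto simp: dvd_minus_diff_iff)
qed

lemma conj_Amat_skew_hermitian:
  assumes g: "g \<in> G True l" and b: "b \<in> Ov"
  shows "mc l (mstar gal (conjg True l g (Amat True b))) (msmult (- 1) (conjg True l g (Amat True b)))"
proof -
  let ?A = "Amat True b" and ?gi = "mi True l g"
  have "mc l (mmul (mstar gal g) g) mone" using g unfolding G_iff by blast
  then have sg: "mc l (mstar gal g) ?gi" using mstar_eq_right_inverse minv(2)[OF g] by blast
  have sgi: "mc l (mstar gal ?gi) g" using mcong_sym[OF mstar_mcong[OF sg]] by simp
  have sA: "mstar gal ?A = msmult (- 1) ?A" using b by (simp add: eps_def)
  have "mstar gal (conjg True l g ?A) = mmul (mstar gal ?gi) (mmul (mstar gal ?A) (mstar gal g))"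
    by (simp add: mstar_mmul)
  also have "mc l \<dots> (mmul g (mmul (mstar gal ?A) ?gi))" by (intro mcong_mmul sgi sg mcong_refl)
  also have "mmul g (mmul (mstar gal ?A) ?gi) = msmult (- 1) (conjg True l g ?A)"
    by (simp only: sA msmult_mmul mmul_assoc)
  finally show ?thesis .
qed

lemma conj_Amat_entries:
  assumes g: "g \<in> G u l" and b: "b \<in> Ov" and k: "k \<le> l" and M: "conjg u l g (Amat u b) = M2 m1 m2 m3 m4"
  shows "if u then real_mod k m1 \<and> imag_mod k m2 \<and> imag_mod k m3
         else m1 \<in> Ov \<and> m2 \<in> Ov \<and> m3 \<in> Ov \<and> m4 \<in> Ov"
proof (cases u)
  case False
  have "entries (conjg u l g (Amat u b)) \<subseteq> R u"
    by (intro entries_mmul G_entries[OF g] entries_Amat[OF b] minv(1)[OF g])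
  with False show ?thesis unfolding M Rset_def by simp
next
  case True
  \<comment> \<open>conjugates of a skew-hermitian matrix are skew-hermitian: read off the entries\<close>
  have sk: "mc k (M2 (gal m4) (gal m2) (gal m3) (gal m1)) (M2 (- m1) (- m2) (- m3) (- m4))"
    using mcong_mono[OF k conj_Amat_skew_hermitian[of g l b]] g b M True by simp
  have "\<pi>^k dvd m1 + m4" using conj_Amat_invariants[OF g k M] by simp
  moreover have "\<pi>^k dvd gal m1 + m4" using sk by simp
  ultimately have "\<pi>^k dvd m1 - gal m1" by (metis dvd_diff add_diff_cancel_right)
  moreover have "\<pi>^k dvd m2 + gal m2" "\<pi>^k dvd m3 + gal m3" using sk by (simp_all add: add.commute)
  ultimately show ?thesis using True real_mod_of_gal imag_mod_of_gal by simp
qed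

lemma conj_mcong_zero:
  assumes g: "g \<in> G u l" and l: "1 \<le> l" and M: "mc 1 (conjg u l g A) mzero"
  shows "mc 1 A mzero"
proof -
  let ?gi = "mi u l g"
  have "mc l A (mmul (mmul mone A) mone)" by simp
  also have "mc l \<dots> (mmul (mmul (mmul ?gi g) A) (mmul ?gi g))"
    by (intro mcong_mmul mcong_refl mcong_sym[OF minv(3)[OF g]])
  also have "mmul (mmul (mmul ?gi g) A) (mmul ?gi g) = mmul (mmul ?gi (conjg u l g A)) g"
    by (simp add: mmul_assoc)
  finally have "mc 1 A (mmul (mmul ?gi (conjg u l g A)) g)" using mcong_mono[OF l] by blast
  also have "mc 1 \<dots> (mmul (mmul ?gi mzero) g)" by (intro mcong_mmul_right mcong_mmul_left M)
  finally show ?thesis by simp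
qed

lemma pi_dvd_conj_Amat_lower_left:
  assumes l: "1 \<le> l" and g: "g \<in> G u l" and a: "cuspidal_entry u a" and b: "split_entry u b"
    and M: "conjg u l g (Amat u b) = M2 m1 m2 m3 m4"
    and norm: "\<pi> dvd eps u \<theta> * eps u \<theta> * b - a * m3^2"
  shows "\<pi> dvd m3"
proof -
  have aO: "a \<in> Ov" "\<not> \<pi> dvd a" and bO: "b \<in> Ov"
    using a b unfolding cuspidal_entry_def split_entry_def by auto
  have classes: "\<pi> dvd b \<or> (square_mod Ov \<pi> 1 a \<longleftrightarrow> \<not> square_mod Ov \<pi> 1 b)"
    by (rule cuspidal_split_square_classes[OF a b])
  show ?thesis
  proof (cases u)
    case False
    then have "eps u \<theta> = 1" "m3 \<in> Ov" using conj_Amat_entries[OF g bO l M] unfolding eps_def by auto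
    then show ?thesis using pi_dvd_of_square_classes_differ[OF aO bO _ _ classes] norm by simp
  next
    case True
    obtain w where "w \<in> Ov" "\<pi>^l dvd m3 - \<theta> * w"
      using conj_Amat_entries[OF g bO order.refl M] True unfolding imag_mod_def by auto
    then have w: "w \<in> Ov" "\<pi> dvd m3 - \<theta> * w" using pi_dvd_of_pi_power_dvd[OF l] by auto
    have "\<pi> dvd a * (m3 * m3) - a * ((\<theta> * w) * (\<theta> * w))"
      by (intro dvd_diff_mult[of _ a a] dvd_diff_mult[OF w(2) w(2)]) simp
    then have "\<pi> dvd a * m3^2 - a * (\<theta> * w)^2" by (simp only: power2_eq_square)
    then have "\<pi> dvd (\<theta> * \<theta> * b - a * m3^2) + (a * m3^2 - a * (\<theta> * w)^2)"
      using norm True unfolding eps_def by (simp only: if_True dvd_add)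
    then have "\<pi> dvd \<theta>^2 * (b - a * w^2)" by (simp add: algebra_simps power2_eq_square)
    then have "\<pi> dvd b - a * w^2" using dvd_cancel_theta_sq[of 1 "b - a * w^2"] by simp
    then have "\<pi> dvd w" using pi_dvd_of_square_classes_differ[OF aO bO w(1) _ classes] by simp
    then show ?thesis using w(2) by (metis dvd_add dvd_mult diff_add_cancel)
  qed
qed

text \<open>Otherwise trace, determinant and the square classes of a and b would force all entries of
  g Amat b g^-1, hence of Amat b, to vanish modulo pi.\<close>
lemma conj_Amat_not_degenerate:
  assumes l: "1 \<le> l" and g: "g \<in> G u l" and a: "cuspidal_entry u a" and b: "split_entry u b"
    and M: "conjg u l g (Amat u b) = M2 m1 m2 m3 m4"
  shows "\<not> (\<pi> dvd m1 \<and> \<pi> dvd m2 - a * m3)"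
proof
  assume m12: "\<pi> dvd m1 \<and> \<pi> dvd m2 - a * m3"
  define e where "e = eps u \<theta>"
  have inv: "\<pi> dvd m1 + m4" "\<pi> dvd e * b * e + (m1 * m4 - m2 * m3)"
    using conj_Amat_invariants[OF g l M] unfolding e_def by (simp_all add: power_one_right)
  have m4: "\<pi> dvd m4" using inv(1) m12 by (metis dvd_add_right_iff)
  have eq: "e * e * b - a * m3^2 = (e * b * e + (m1 * m4 - m2 * m3)) - m1 * m4 + m3 * (m2 - a * m3)"
    by (simp add: algebra_simps power2_eq_square)
  have "\<pi> dvd e * e * b - a * m3^2"
    unfolding eq using m12 m4 by (intro dvd_add[OF dvd_diff[OF inv(2)]] dvd_mult) simp_all
  then have m3: "\<pi> dvd m3" using pi_dvd_conj_Amat_lower_left[OF l g a b M] unfolding e_def by blast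
  then have "\<pi> dvd m2" using m12 by (metis dvd_add dvd_mult diff_add_cancel)
  with m12 m3 m4 have "mc 1 (conjg u l g (Amat u b)) mzero" unfolding M by (simp add: mzero_def)
  then have "mc 1 (Amat u b) mzero" by (rule conj_mcong_zero[OF g l])
  then show False using pi_not_dvd_eps by (simp add: mzero_def)
qed

lemma centralizer_elem_in_GL:
  assumes u: "\<not> u" and a: "a \<in> Ov" and UV: "U \<in> Ov" "V \<in> Ov" and d: "\<not> \<pi> dvd U * U - a * V * V"
  shows "M2 U (a * V) V U \<in> G u l"
proof -
  let ?c = "M2 U (a * V) V U"
  obtain di where di: "di \<in> Ov" "(U * U - a * V * V) * di = 1"
    using inverse_in_Ov[OF _ d] a UV by blast
  let ?h = "M2 (di * U) (- (di * (a * V))) (- (di * V)) (di * U)"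
  have "mmul ?c ?h = M2 ((U * U - a * V * V) * di) 0 0 ((U * U - a * V * V) * di)"
    "mmul ?h ?c = M2 ((U * U - a * V * V) * di) 0 0 ((U * U - a * V * V) * di)"
    by (simp_all add: algebra_simps)
  then have "mmul ?c ?h = mone" "mmul ?h ?c = mone" unfolding di(2) mone_def by simp_all
  moreover have "entries ?c \<subseteq> R u" "entries ?h \<subseteq> R u" using u a UV di unfolding Rset_def by auto
  ultimately show ?thesis unfolding G_iff using u by (metis mcong_refl)
qed

text \<open>Write a = s^2 modulo pi^l.  Then u0^2 - a theta^2 v0^2 is congruent to the norm of
  z = u0 + s theta v0, and the multiple by mu = gal z / N(z) is unitary.\<close>
lemma unitary_rescaling:
  assumes a: "a \<in> Ov" "\<not> \<pi> dvd a" "square_mod Ov \<pi> 1 a" and uv: "u0 \<in> Ov" "v0 \<in> Ov"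
    and nd: "\<not> \<pi> dvd u0 * u0 - a * (\<theta> * v0) * (\<theta> * v0)" and l: "1 \<le> l"
  shows "\<exists>\<mu>. msmult \<mu> (M2 u0 (a * (\<theta> * v0)) (\<theta> * v0) u0) \<in> G True l"
proof -
  let ?X = "M2 u0 (a * (\<theta> * v0)) (\<theta> * v0) u0"
  define lam where "lam = u0 * u0 - a * (\<theta> * v0) * (\<theta> * v0)"
  obtain s where s: "s \<in> Ov" "\<pi>^l dvd a - s^2"
    using square_mod_of_square_mod_pi[OF a] unfolding square_mod_def by blast
  define z where "z = u0 + s * \<theta> * v0"
  define Nz where "Nz = u0 * u0 - s * s * \<theta>^2 * v0 * v0"
  have "Nz \<in> Ov" unfolding Nz_def using uv s by (intro Ov_diff Ov_mult theta_sq_in_Ov)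
  have gz: "gal z = u0 - s * \<theta> * v0" unfolding z_def using uv s by simp
  have zNz: "z * gal z = Nz" unfolding gz unfolding z_def Nz_def by (simp add: algebra_simps power2_eq_square)
  have "lam - Nz = - ((a - s^2) * (\<theta>^2 * v0 * v0))"
    by (simp add: lam_def Nz_def algebra_simps power2_eq_square)
  then have lN: "\<pi>^l dvd lam - Nz" using s(2) by simp
  then have "\<pi> dvd lam - Nz" using pi_dvd_of_pi_power_dvd l by blast
  then have "\<not> \<pi> dvd Nz" using nd unfolding lam_def by (metis dvd_add diff_add_cancel)
  then obtain Ni where Ni: "Ni \<in> Ov" "Nz * Ni = 1" using inverse_in_Ov \<open>Nz \<in> Ov\<close> by blast
  define \<mu> where "\<mu> = gal z * Ni"
  have "gal \<mu> * \<mu> = (z * gal z) * Ni * Ni" unfolding \<mu>_def using Ni by (simp add: algebra_simps)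
  then have g\<mu>: "gal \<mu> * \<mu> = Ni" unfolding zNz using Ni(2) by simp
  have X: "mstar gal ?X = M2 u0 (- (a * (\<theta> * v0))) (- (\<theta> * v0)) u0" using uv a by simp
  have p1: "mmul (mstar gal ?X) ?X = msmult lam mone" and p2: "mmul ?X (mstar gal ?X) = msmult lam mone"
    unfolding X lam_def by (simp_all add: mone_def algebra_simps)
  define c where "c = msmult \<mu> ?X"
  have "mmul (mstar gal c) c = msmult (Ni * lam) mone"
    unfolding c_def mstar_msmult msmult_mmul p1 msmult_msmult g\<mu>[symmetric] by (simp add: algebra_simps)
  moreover have "mmul c (mstar gal c) = msmult (Ni * lam) mone"
    unfolding c_def mstar_msmult msmult_mmul p2 msmult_msmult g\<mu>[symmetric] by (simp add: algebra_simps)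
  moreover have "Ni * lam - 1 = Ni * (lam - Nz)" using Ni(2) by (simp add: algebra_simps)
  then have "mc l (msmult (Ni * lam) mone) mone"
    using lN mcong_msmult_scalar[of \<pi> l "Ni * lam" 1 mone] by simp
  ultimately have "c \<in> G True l" unfolding G_iff Rset_def by (auto intro!: exI[of _ "mstar gal c"])
  then show ?thesis unfolding c_def by blast
qed

lemma centralizer_elem_in_G:
  assumes a: "cuspidal_entry u a" and k: "1 \<le> k" "k \<le> l" and UV: "admissible_coords u k U V"
    and nd: "\<not> \<pi> dvd U * U - a * V * V"
    and tw: "mc k (mmul (M2 U (a * V) V U) M) (mmul N (M2 U (a * V) V U))"
  shows "\<exists>c. c \<in> G u l \<and> mmul c (Amat u a) = mmul (Amat u a) c \<and> mc k (mmul c M) (mmul N c)"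
proof (cases u)
  case False
  then have "M2 U (a * V) V U \<in> G u l"
    using centralizer_elem_in_GL[OF False _ _ _ nd] a UV
    unfolding cuspidal_entry_def admissible_coords_def by auto
  then show ?thesis using tw centralizer_commute[of U a V "eps u \<theta>"] by blast
next
  case True
  obtain u0 v0 where uv: "u0 \<in> Ov" "\<pi>^k dvd U - u0" "v0 \<in> Ov" "\<pi>^k dvd V - \<theta> * v0"
    using UV True unfolding admissible_coords_def real_mod_def imag_mod_def by auto
  let ?X = "M2 U (a * V) V U" and ?Y = "M2 u0 (a * (\<theta> * v0)) (\<theta> * v0) u0"
  have XY: "mc k ?X ?Y" using uv by (simp add: dvd_diff_mult)
  have "mc k (mmul ?Y M) (mmul ?X M)" by (intro mcong_mmul_right mcong_sym[OF XY])
  also have "mc k \<dots> (mmul N ?X)" by (rule tw)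
  also have "mc k \<dots> (mmul N ?Y)" by (intro mcong_mmul_left XY)
  finally have tw0: "mc k (mmul ?Y M) (mmul N ?Y)" .
  have "\<pi> dvd (U * U - a * V * V) - (u0 * u0 - a * (\<theta> * v0) * (\<theta> * v0))"
    using mcong_det2[OF XY] pi_dvd_of_pi_power_dvd[OF k(1)] by (simp add: algebra_simps)
  then have "\<not> \<pi> dvd u0 * u0 - a * (\<theta> * v0) * (\<theta> * v0)" using nd by (metis dvd_add diff_add_cancel)
  then obtain \<mu> where \<mu>: "msmult \<mu> ?Y \<in> G u l"
    using unitary_rescaling[OF _ _ _ uv(1,3) _ order.trans[OF k]] a True
    unfolding cuspidal_entry_def by auto
  have "mmul (msmult \<mu> ?Y) (Amat u a) = mmul (Amat u a) (msmult \<mu> ?Y)"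
    unfolding msmult_mmul centralizer_commute ..
  moreover have "mc k (mmul (msmult \<mu> ?Y) M) (mmul N (msmult \<mu> ?Y))"
    unfolding msmult_mmul by (rule mcong_msmult[OF tw0])
  ultimately show ?thesis using \<mu> by blast
qed

lemma second_factor_of_intertwiner:
  assumes g: "g \<in> G u l" and h: "h \<in> G u l" and c1: "c1 \<in> G u l" and k: "k \<le> l"
    and tw: "mc k (mmul c1 (conjg u l g A)) (mmul (conjg u l h A) c1)"
  shows "\<exists>c2. c2 \<in> G u l \<and> mc k (mmul c2 A) (mmul A c2) \<and> mc l h (mmul (mmul c1 g) c2)"
proof -
  let ?gi = "mi u l g" and ?ci = "mi u l c1"
  let ?M = "conjg u l g A" and ?N = "conjg u l h A"
  define c2 where "c2 = mmul (mmul ?gi ?ci) h"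
  have "mmul (mmul c1 g) c2 = mmul c1 (mmul (mmul g ?gi) (mmul ?ci h))" unfolding c2_def by (simp only: mmul_assoc)
  also have "mc l \<dots> (mmul c1 (mmul mone (mmul ?ci h)))" by (intro mcong_mmul_left mcong_mmul_right minv(2)[OF g])
  also have "mmul c1 (mmul mone (mmul ?ci h)) = mmul (mmul c1 ?ci) h" by (simp add: mmul_assoc)
  also have "mc l \<dots> (mmul mone h)" by (intro mcong_mmul_right minv(2)[OF c1])
  finally have H: "mc l h (mmul (mmul c1 g) c2)" by (simp add: mcong_sym)
  have "mc k ?N (mmul ?N (mmul c1 ?ci))"
    using mcong_mmul_left[OF mcong_mono[OF k mcong_sym[OF minv(2)[OF c1]]], of ?N] by simp
  then have "mc k (mmul ?ci ?N) (mmul ?ci (mmul ?N (mmul c1 ?ci)))" by (rule mcong_mmul_left)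
  also have "mmul ?ci (mmul ?N (mmul c1 ?ci)) = mmul ?ci (mmul (mmul ?N c1) ?ci)" by (simp only: mmul_assoc)
  also have "mc k \<dots> (mmul ?ci (mmul (mmul c1 ?M) ?ci))"
    by (intro mcong_mmul_left mcong_mmul_right mcong_sym[OF tw])
  also have "mmul ?ci (mmul (mmul c1 ?M) ?ci) = mmul (mmul ?ci c1) (mmul ?M ?ci)" by (simp only: mmul_assoc)
  also have "mc k \<dots> (mmul mone (mmul ?M ?ci))" by (intro mcong_mmul_right mcong_mono[OF k] minv(3)[OF c1])
  finally have cN: "mc k (mmul ?ci ?N) (mmul ?M ?ci)" by simp
  have "mmul ?gi ?M = mmul (mmul ?gi g) (mmul A ?gi)" by (simp only: mmul_assoc)
  also have "mc l \<dots> (mmul mone (mmul A ?gi))" by (intro mcong_mmul_right minv(3)[OF g])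
  finally have gM: "mc l (mmul ?gi ?M) (mmul A ?gi)" by simp
  have "mmul c2 A = mmul ?gi (mmul ?ci (mmul h A))" unfolding c2_def by (simp only: mmul_assoc)
  also have "mc k \<dots> (mmul ?gi (mmul ?ci (mmul ?N h)))"
    by (intro mcong_mmul_left mcong_mono[OF k conjg_intertwines[OF h]])
  also have "mmul ?gi (mmul ?ci (mmul ?N h)) = mmul ?gi (mmul (mmul ?ci ?N) h)" by (simp only: mmul_assoc)
  also have "mc k \<dots> (mmul ?gi (mmul (mmul ?M ?ci) h))" by (intro mcong_mmul_left mcong_mmul_right cN)
  also have "mmul ?gi (mmul (mmul ?M ?ci) h) = mmul (mmul ?gi ?M) (mmul ?ci h)" by (simp only: mmul_assoc)
  also have "mc k \<dots> (mmul (mmul A ?gi) (mmul ?ci h))" by (intro mcong_mmul_right mcong_mono[OF k gM])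
  also have "mmul (mmul A ?gi) (mmul ?ci h) = mmul A c2" unfolding c2_def by (simp only: mmul_assoc)
  finally have "mc k (mmul c2 A) (mmul A c2)" .
  moreover have "c2 \<in> G u l" unfolding c2_def by (intro G_mmul minv(4) g c1 h)
  ultimately show ?thesis using H by blast
qed

lemma candidate_coords_admissible:
  assumes g: "g \<in> G u l" and h: "h \<in> G u l" and k: "k \<le> l" and a: "a \<in> Ov" and b: "b \<in> Ov"
    and M: "conjg u l g (Amat u b) = M2 m1 m2 m3 m4" and N: "conjg u l h (Amat u b) = M2 n1 n2 n3 n4"
  shows "admissible_coords u k (m1 + n1) (n3 - m3)"
    "admissible_coords u k (eps u \<theta> * (a * m3 - n2)) (eps u \<theta> * (n1 - m1))"
  using conj_Amat_entries[OF g b k M] conj_Amat_entries[OF h b k N] a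
  unfolding admissible_coords_def eps_def
  by (auto intro!: real_mod_add imag_mod_diff real_mod_theta_mult imag_mod_theta_mult
      imag_mod_mult_Ov real_mod_diff Ov_add Ov_diff Ov_mult)

lemma conj_Amat_pair_congruences:
  assumes k: "k \<le> l" and g: "g \<in> G u l" and h: "h \<in> G u l"
    and M: "conjg u l g (Amat u b) = M2 m1 m2 m3 m4" and N: "conjg u l h (Amat u b) = M2 n1 n2 n3 n4"
    and T: "\<pi>^k dvd mtrace (mmul (Amat u a) (conjg u l g (Amat u b)))
                     - mtrace (mmul (Amat u a) (conjg u l h (Amat u b)))"
  shows "\<pi>^k dvd m1 + m4" "\<pi>^k dvd n1 + n4" "\<pi>^k dvd (m1 * m4 - m2 * m3) - (n1 * n4 - n2 * n3)"
    "\<pi>^k dvd (a * m3 + m2) - (a * n3 + n2)"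
proof -
  note Mi = conj_Amat_invariants[OF g k M] and Ni = conj_Amat_invariants[OF h k N]
  show "\<pi>^k dvd m1 + m4" "\<pi>^k dvd n1 + n4" using Mi(1) Ni(1) .
  show "\<pi>^k dvd (m1 * m4 - m2 * m3) - (n1 * n4 - n2 * n3)"
    using dvd_diff[OF Mi(2) Ni(2)] by simp
  have "\<pi>^k dvd eps u \<theta> * ((a * m3 + m2) - (a * n3 + n2))"
    using T unfolding M N by (simp add: algebra_simps)
  then show "\<pi>^k dvd (a * m3 + m2) - (a * n3 + n2)" by (rule dvd_cancel_eps)
qed

text \<open>Both candidate intertwiners commute with Amat u a; if both had norm divisible by pi,
  the cuspidality of a would force the congruences excluded by conj_Amat_not_degenerate.\<close>
lemma exists_invertible_intertwiner:
  assumes k: "1 \<le> k" "k \<le> l" and a: "cuspidal_entry u a" and b: "split_entry u b"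
    and g: "g \<in> G u l" and h: "h \<in> G u l"
    and T: "\<pi>^k dvd mtrace (mmul (Amat u a) (conjg u l g (Amat u b)))
                     - mtrace (mmul (Amat u a) (conjg u l h (Amat u b)))"
  shows "\<exists>U V. admissible_coords u k U V \<and> \<not> \<pi> dvd U * U - a * V * V \<and>
    mc k (mmul (M2 U (a * V) V U) (conjg u l g (Amat u b))) (mmul (conjg u l h (Amat u b)) (M2 U (a * V) V U))"
proof (rule ccontr)
  assume none: "\<not> ?thesis"
  define e where "e = eps u \<theta>"
  obtain m1 m2 m3 m4 where M: "conjg u l g (Amat u b) = M2 m1 m2 m3 m4" by (metis m2.exhaust)
  obtain n1 n2 n3 n4 where N: "conjg u l h (Amat u b) = M2 n1 n2 n3 n4" by (metis m2.exhaust)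
  have aO: "a \<in> Ov" and bO: "b \<in> Ov" using a b unfolding cuspidal_entry_def split_entry_def by auto
  note C = conj_Amat_pair_congruences[OF k(2) g h M N T]
  note adm = candidate_coords_admissible[OF g h k(2) aO bO M N, folded e_def]
  have degenerate: "\<pi> dvd U * U - a * V * V"
    if "admissible_coords u k U V"
      "mc k (mmul (M2 U (a * V) V U) (M2 m1 m2 m3 m4)) (mmul (M2 n1 n2 n3 n4) (M2 U (a * V) V U))" for U V
    using none that unfolding M N by blast
  have "\<pi> dvd (m1 + n1) * (m1 + n1) - a * (n3 - m3) * (n3 - m3)"
    by (rule degenerate[OF adm(1) intertwiner_diag[OF C]])
  then have A: "\<pi> dvd m1 + n1" "\<pi> dvd n3 - m3"
    using norm_dvd_imp_coords_dvd[OF k(1) a adm(1)] by blast+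
  have "M2 (e * (a * m3 - n2)) (a * (e * (n1 - m1))) (e * (n1 - m1)) (e * (a * m3 - n2))
      = msmult e (M2 (a * m3 - n2) (a * (n1 - m1)) (n1 - m1) (a * m3 - n2))"
    by (simp add: algebra_simps)
  then have "mc k (mmul (M2 (e * (a * m3 - n2)) (a * (e * (n1 - m1))) (e * (n1 - m1)) (e * (a * m3 - n2))) (M2 m1 m2 m3 m4))
             (mmul (M2 n1 n2 n3 n4) (M2 (e * (a * m3 - n2)) (a * (e * (n1 - m1))) (e * (n1 - m1)) (e * (a * m3 - n2))))"
    using mcong_msmult[OF intertwiner_offdiag[OF C]] by (simp only: msmult_mmul)
  then have "\<pi> dvd (e * (a * m3 - n2)) * (e * (a * m3 - n2)) - a * (e * (n1 - m1)) * (e * (n1 - m1))"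
    by (rule degenerate[OF adm(2)])
  then have "\<pi> dvd e * (a * m3 - n2)" "\<pi> dvd e * (n1 - m1)"
    using norm_dvd_imp_coords_dvd[OF k(1) a adm(2)] by blast+
  then have B: "\<pi> dvd a * m3 - n2" "\<pi> dvd n1 - m1"
    using dvd_cancel_eps[of 1 u "a * m3 - n2"] dvd_cancel_eps[of 1 u "n1 - m1"] unfolding e_def by auto
  have "\<pi> dvd 2 * m1" using dvd_diff[OF A(1) B(2)] by (simp add: algebra_simps)
  then have m1: "\<pi> dvd m1" using dvd_cancel_2[of 1 m1] by simp
  have eq: "m2 - a * m3 = ((a * m3 + m2) - (a * n3 + n2)) + a * (n3 - m3) - (a * m3 - n2)"
    by (simp add: algebra_simps)
  have "\<pi> dvd m2 - a * m3"
    unfolding eq by (intro dvd_diff dvd_add pi_dvd_of_pi_power_dvd[OF k(1) C(4)] dvd_mult A(2) B(1))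
  with m1 show False using conj_Amat_not_degenerate[OF order.trans[OF k] g a b M] by blast
qed

lemma double_coset_factorization:
  assumes k: "1 \<le> k" "k \<le> l" and a: "cuspidal_entry u a" and b: "split_entry u b"
    and g: "g \<in> G u l" and h: "h \<in> G u l"
    and T: "\<pi>^k dvd mtrace (mmul (Amat u a) (conjg u l g (Amat u b)))
                     - mtrace (mmul (Amat u a) (conjg u l h (Amat u b)))"
  shows "\<exists>c1 c2. c1 \<in> G u l \<and> mc k (mmul c1 (Amat u a)) (mmul (Amat u a) c1)
    \<and> c2 \<in> G u l \<and> mc k (mmul c2 (Amat u b)) (mmul (Amat u b) c2) \<and> mc l h (mmul (mmul c1 g) c2)"
proof -
  obtain U V where "admissible_coords u k U V" "\<not> \<pi> dvd U * U - a * V * V"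
    "mc k (mmul (M2 U (a * V) V U) (conjg u l g (Amat u b))) (mmul (conjg u l h (Amat u b)) (M2 U (a * V) V U))"
    using exists_invertible_intertwiner[OF k a b g h T] by blast
  then obtain c1 where c1: "c1 \<in> G u l" "mmul c1 (Amat u a) = mmul (Amat u a) c1"
    "mc k (mmul c1 (conjg u l g (Amat u b))) (mmul (conjg u l h (Amat u b)) c1)"
    using centralizer_elem_in_G[OF a k] by blast
  then obtain c2 where "c2 \<in> G u l" "mc k (mmul c2 (Amat u b)) (mmul (Amat u b) c2)" "mc l h (mmul (mmul c1 g) c2)"
    using second_factor_of_intertwiner[OF g h c1(1) k(2)] by blast
  with c1 show ?thesis by (metis mcong_refl)
qed

lemma conj_Amat_companion_cong:
  assumes "conjugate_in u Ov \<pi> gal k (Amat u \<alpha>) (M2 x (eps u \<theta> * \<sigma>) (eps u \<theta>) x)"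
  shows "\<pi>^k dvd \<sigma> - \<alpha>"
proof -
  define e where "e = eps u \<theta>"
  obtain g where "g \<in> G u k" and g: "mc k (mmul g (M2 0 (e * \<alpha>) e 0)) (mmul (M2 x (e * \<sigma>) e x) g)"
    using assms unfolding conjugate_in_def e_def by blast
  then obtain h where h: "mc k (mmul g h) mone" "mc k (mmul h g) mone" unfolding G_iff by blast
  note inv = similar_mtrace_det2[OF g h]
  have "\<pi>^k dvd 2 * x" using inv(1) by (simp add: mult_2 [symmetric])
  then have "\<pi>^k dvd x" by (rule dvd_cancel_2)
  then have "\<pi>^k dvd ((0 * 0 - e * \<alpha> * e) - (x * x - e * \<sigma> * e)) + x * x"
    using inv(2) by (simp only: det2.simps dvd_add dvd_mult)
  moreover have "((0 * 0 - e * \<alpha> * e) - (x * x - e * \<sigma> * e)) + x * x = e * (e * (\<sigma> - \<alpha>))"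
    by (simp add: algebra_simps)
  ultimately have "\<pi>^k dvd e * (e * (\<sigma> - \<alpha>))" by simp
  then have "\<pi>^k dvd e * (\<sigma> - \<alpha>)" unfolding e_def by (rule dvd_cancel_eps)
  then show ?thesis unfolding e_def by (rule dvd_cancel_eps)
qed

lemma square_class_of_cong:
  assumes k: "1 \<le> k" and x: "x \<in> Ov" and y: "\<not> \<pi> dvd y" and d: "\<pi>^k dvd x - y"
  shows "\<not> \<pi> dvd x" "square_mod Ov \<pi> 1 x \<longleftrightarrow> square_mod Ov \<pi> k y"
proof -
  show unit: "\<not> \<pi> dvd x" using y pi_dvd_of_pi_power_dvd[OF k d] by (metis dvd_diff_right_iff dvd_diff_swap)
  have "square_mod Ov \<pi> k x \<longleftrightarrow> square_mod Ov \<pi> k y"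
    using square_mod_cong d dvd_diff_swap by blast
  moreover have "square_mod Ov \<pi> 1 x \<longleftrightarrow> square_mod Ov \<pi> k x"
    using square_mod_mono[OF k] square_mod_of_square_mod_pi[OF x unit] by blast
  ultimately show "square_mod Ov \<pi> 1 x \<longleftrightarrow> square_mod Ov \<pi> k y" by simp
qed

lemma cuspidal_entry_of_tt_cus:
  assumes k: "1 \<le> k" and tt: "tt_cus u Ov \<pi> \<theta> gal k (Amat u \<alpha>)"
    and lift: "\<alpha>t \<in> Ov" "\<pi>^k dvd \<alpha>t - \<alpha>"
  shows "cuspidal_entry u \<alpha>t"
proof -
  obtain x \<sigma> where \<sigma>: "\<not> \<pi> dvd \<sigma>" "if u then square_mod Ov \<pi> k \<sigma> else \<not> square_mod Ov \<pi> k \<sigma>"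
    "conjugate_in u Ov \<pi> gal k (Amat u \<alpha>) (M2 x (eps u \<theta> * \<sigma>) (eps u \<theta>) x)"
    using tt unfolding tt_cus_def unit_mod_def by blast
  have "\<pi>^k dvd \<alpha>t - \<sigma>"
    using conj_Amat_companion_cong[OF \<sigma>(3)] lift(2) dvd_diff_swap dvd_diff_trans by blast
  from square_class_of_cong[OF k lift(1) \<sigma>(1) this] \<sigma>(2) lift(1) show ?thesis
    unfolding cuspidal_entry_def by (cases u) simp_all
qed

lemma split_entry_of_tt_ss_sns:
  assumes k: "1 \<le> k"
    and tt: "tt_ss u Ov \<pi> \<theta> gal k (Amat u \<alpha>) \<or> tt_sns u Ov \<pi> \<theta> gal k (Amat u \<alpha>)"
    and lift: "\<alpha>t \<in> Ov" "\<pi>^k dvd \<alpha>t - \<alpha>"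
  shows "split_entry u \<alpha>t"
  using tt
proof
  assume "tt_ss u Ov \<pi> \<theta> gal k (Amat u \<alpha>)"
  then obtain x \<delta> where \<delta>: "\<not> \<pi> dvd \<delta>" "if u then \<not> square_mod Ov \<pi> k \<delta> else square_mod Ov \<pi> k \<delta>"
    "conjugate_in u Ov \<pi> gal k (Amat u \<alpha>) (M2 x (eps u \<theta> * \<delta>) (eps u \<theta>) x)"
    unfolding tt_ss_def unit_mod_def by blast
  have "\<pi>^k dvd \<alpha>t - \<delta>"
    using conj_Amat_companion_cong[OF \<delta>(3)] lift(2) dvd_diff_swap dvd_diff_trans by blast
  from square_class_of_cong[OF k lift(1) \<delta>(1) this] \<delta>(2) lift(1) show ?thesis
    unfolding split_entry_def by (cases u) simp_all
next
  assume "tt_sns u Ov \<pi> \<theta> gal k (Amat u \<alpha>)"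
  then obtain x \<beta> where "conjugate_in u Ov \<pi> gal k (Amat u \<alpha>) (M2 x (eps u \<theta> * (\<pi> * \<beta>)) (eps u \<theta>) x)"
    unfolding tt_sns_def by (auto simp: mult.assoc)
  from conj_Amat_companion_cong[OF this] have "\<pi>^k dvd \<alpha>t - \<pi> * \<beta>"
    using lift(2) dvd_diff_swap dvd_diff_trans by blast
  then have "\<pi> dvd \<alpha>t - \<pi> * \<beta>" by (rule pi_dvd_of_pi_power_dvd[OF k])
  then have "\<pi> dvd (\<alpha>t - \<pi> * \<beta>) + \<pi> * \<beta>" by (rule dvd_add) simp
  then show ?thesis using lift(1) unfolding split_entry_def by simp
qed

lemma trace_pairing_cong:
  assumes x: "x \<in> G u l" and g: "g \<in> G u l" and h: "h \<in> G u l" and k: "k \<le> l" and A: "mtrace A = 0"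
    and r: "mc k (mmul x (madd A (conjg u l g B))) (mmul (madd A (conjg u l h B)) x)"
  shows "\<pi>^k dvd mtrace (mmul A (conjg u l g B)) - mtrace (mmul A (conjg u l h B))"
proof -
  let ?M = "conjg u l g B" and ?N = "conjg u l h B"
  have sum: "\<pi>^k dvd det2 (madd A ?M) - det2 (madd A ?N)"
    using similar_mtrace_det2(2)[OF r mcong_mono[OF k minv(2)[OF x]] mcong_mono[OF k minv(3)[OF x]]] .
  have "\<pi>^k dvd det2 B - det2 ?M" "\<pi>^k dvd det2 B - det2 ?N"
    using conj_mtrace_det2(2)[OF g] conj_mtrace_det2(2)[OF h] pi_power_dvd_mono[OF k] by blast+
  then have "\<pi>^k dvd (det2 B - det2 ?M) - (det2 B - det2 ?N) + (det2 (madd A ?M) - det2 (madd A ?N))"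
    using sum by (intro dvd_add[OF dvd_diff])
  also have "(det2 B - det2 ?M) - (det2 B - det2 ?N) + (det2 (madd A ?M) - det2 (madd A ?N))
      = - (mtrace (mmul A ?M) - mtrace (mmul A ?N))"
    unfolding det2_madd A by (simp add: algebra_simps)
  finally show ?thesis by (simp only: dvd_minus_iff)
qed

lemma double_coset_eq:
  assumes l: "2 \<le> l" and psi: "good_character u Ov \<pi> l \<psi>"
    and a: "cuspidal_entry u a" and b: "split_entry u b" and g: "g \<in> G u l" and h: "h \<in> G u l"
    and x: "x \<in> G u l" and r: "mc (floor_half l)
      (mmul x (madd (Amat u a) (conjg u l g (Amat u b)))) (mmul (madd (Amat u a) (conjg u l h (Amat u b))) x)"
  shows "double_coset u Ov \<pi> gal l (stabS u Ov \<pi> gal l \<psi> (Amat u a)) h (stabS u Ov \<pi> gal l \<psi> (Amat u b))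
       = double_coset u Ov \<pi> gal l (stabS u Ov \<pi> gal l \<psi> (Amat u a)) g (stabS u Ov \<pi> gal l \<psi> (Amat u b))"
proof -
  let ?DC = "\<lambda>h. double_coset u Ov \<pi> gal l (stabS u Ov \<pi> gal l \<psi> (Amat u a)) h (stabS u Ov \<pi> gal l \<psi> (Amat u b))"
  have k: "1 \<le> floor_half l" "floor_half l \<le> l" using l unfolding floor_half_def by auto
  have ent: "entries (Amat u a) \<subseteq> R u" "entries (Amat u b) \<subseteq> R u"
    using a b entries_Amat unfolding cuspidal_entry_def split_entry_def by auto
  have T: "\<pi>^floor_half l dvd mtrace (mmul (Amat u a) (conjg u l g (Amat u b)))
      - mtrace (mmul (Amat u a) (conjg u l h (Amat u b)))"
    by (rule trace_pairing_cong[OF x g h k(2) _ r]) simp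
  have "?DC h \<subseteq> ?DC g" if "g \<in> G u l" "h \<in> G u l"
    and "\<pi>^floor_half l dvd mtrace (mmul (Amat u a) (conjg u l g (Amat u b)))
      - mtrace (mmul (Amat u a) (conjg u l h (Amat u b)))" for g h
    using double_coset_factorization[OF k a b that] double_coset_subset stabS_of_centralizes[OF psi] ent
    by metis
  then show ?thesis using g h T by (metis dvd_diff_swap subset_antisym)
qed

end

theorem theorem6p10:
  fixes Ov :: "'a::idom set" and \<pi> \<theta> :: 'a and gal :: "'a \<Rightarrow> 'a"
    and unitary :: bool and l :: nat and \<psi> :: "'a \<Rightarrow> complex"
    and \<alpha>1 \<alpha>2 \<alpha>t1 \<alpha>t2 :: 'a
  assumes std: "standing_setup Ov \<pi> \<theta> gal"
    and l: "l \<ge> 2"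
    and psi: "good_character unitary Ov \<pi> l \<psi>"
    and alpha: "\<alpha>1 \<in> Ov" "\<alpha>2 \<in> Ov"
    and A1g: "M2 0 (eps unitary \<theta> * \<alpha>1) (eps unitary \<theta>) 0 \<in> gset unitary Ov \<pi> gal (floor_half l)"
    and A2g: "M2 0 (eps unitary \<theta> * \<alpha>2) (eps unitary \<theta>) 0 \<in> gset unitary Ov \<pi> gal (floor_half l)"
    and cus: "tt_cus unitary Ov \<pi> \<theta> gal (floor_half l) (M2 0 (eps unitary \<theta> * \<alpha>1) (eps unitary \<theta>) 0)"
    and ss_sns: "tt_ss unitary Ov \<pi> \<theta> gal (floor_half l) (M2 0 (eps unitary \<theta> * \<alpha>2) (eps unitary \<theta>) 0)
              \<or> tt_sns unitary Ov \<pi> \<theta> gal (floor_half l) (M2 0 (eps unitary \<theta> * \<alpha>2) (eps unitary \<theta>) 0)"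
    and lifts: "\<alpha>t1 \<in> Ov" "\<alpha>t2 \<in> Ov" "\<pi>^(floor_half l) dvd (\<alpha>t1 - \<alpha>1)" "\<pi>^(floor_half l) dvd (\<alpha>t2 - \<alpha>2)"
    and At1g: "M2 0 (eps unitary \<theta> * \<alpha>t1) (eps unitary \<theta>) 0 \<in> gset unitary Ov \<pi> gal l"
    and At2g: "M2 0 (eps unitary \<theta> * \<alpha>t2) (eps unitary \<theta>) 0 \<in> gset unitary Ov \<pi> gal l"
  shows "\<forall>g \<in> Gset unitary Ov \<pi> gal l.
           card (Wset unitary Ov \<pi> gal l \<psi> (M2 0 (eps unitary \<theta> * \<alpha>t1) (eps unitary \<theta>) 0)
                   (M2 0 (eps unitary \<theta> * \<alpha>t2) (eps unitary \<theta>) 0) g) = 1"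
proof
  interpret unramified_ext Ov \<pi> \<theta> gal by (rule unramified_ext.intro[OF std])
  fix g assume g: "g \<in> G unitary l"
  have k: "1 \<le> floor_half l" using l by (simp add: floor_half_def)
  have a: "cuspidal_entry unitary \<alpha>t1" by (rule cuspidal_entry_of_tt_cus[OF k cus lifts(1,3)])
  have b: "split_entry unitary \<alpha>t2" by (rule split_entry_of_tt_ss_sns[OF k ss_sns lifts(2,4)])
  let ?DC = "\<lambda>h. double_coset unitary Ov \<pi> gal l (stabS unitary Ov \<pi> gal l \<psi> (Amat unitary \<alpha>t1)) h
    (stabS unitary Ov \<pi> gal l \<psi> (Amat unitary \<alpha>t2))"
  let ?M = "\<lambda>x. madd (Amat unitary \<alpha>t1) (conjg unitary l x (Amat unitary \<alpha>t2))"
  have "?DC h = ?DC g"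
    if "h \<in> G unitary l" "x \<in> G unitary l" "mc (floor_half l) (mmul x (?M g)) (mmul (?M h) x)" for h x
    by (rule double_coset_eq[OF l psi a b g that])
  moreover have "mc (floor_half l) (mmul mone (?M g)) (mmul (?M g) mone)" by simp
  ultimately have "{?DC h |h. h \<in> G unitary l \<and> (\<exists>x\<in>G unitary l. mc (floor_half l) (mmul x (?M g)) (mmul (?M h) x))}
      = {?DC g}"
    using g G_mone by blast
  then show "card (Wset unitary Ov \<pi> gal l \<psi> (Amat unitary \<alpha>t1) (Amat unitary \<alpha>t2) g) = 1"
    unfolding Wset_def Let_def by simp
qed

end
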